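(* Let $n\geq 5$. Suppose (1) every graph in $\mathcal{GAQ}_{n-1}$ is even strongly super matched, and (2) every graph in $\mathcal{GAQ}_{n-1}$ is fractional strongly super matched. Then every graph in $\mathcal{GAQ}_n$ is fractional strongly super matched.
   Context: The $n$-dimensional augmented cube $AQ_n$ ($n\geq 1$) has vertex set all binary strings $u_1u_2\cdots u_n$. $AQ_1\cong K_2$ on vertices $0,1$. For $n\geq 2$, $AQ_n$ consists of a copy $AQ^0_{n-1}$ of $AQ_{n-1}$ with $0$ prefixed to every label and a copy $AQ^1_{n-1}$ with $1$ prefixed, plus the following edges: $0u_1\cdots u_{n-1}$ is adjacent to $1v_1\cdots v_{n-1}$ iff either $u_i=v_i$ for all $i$ (cross edge) or $u_i\neq v_i$ for all $i$ (complement edge). Generalized augmented cubes: $\mathcal{GAQ}_4=\{AQ_4\}$; for $n\geq 5$, $\mathcal{GAQ}_n$ consists of all graphs $(V_1\cup V_2, E_1\cup E_2\cup M_1\cup M_2)$ where $(V_1,E_1),(V_2,E_2)$ are (vertex-disjoint copies of, possibly identical) graphs in $\mathcal{GAQ}_{n-1}$ and $M_1,M_2$ are edge-disjoint perfect matchings between $V_1$ and $V_2$; such graphs are $(2n-1)$-regular on $2^n$ vertices. For $F\subseteq V(G)\cup E(G)$, $G-F$ denotes $G$ with the vertices and edges of $F$ deleted. A strong matching preclusion (SMP) set of $G$ is a set $F\subseteq V(G)\cup E(G)$ such that $G-F$ has neither a perfect matching nor an almost-perfect matching (a matching covering all vertices but one); $smp(G)$ is the minimum size of an SMP set, and an SMP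 set of that size is optimal. $G$ is strongly maximally matched if $smp(G)=\delta(G)$ (minimum degree). For an even graph $G$ (even number of vertices), an optimal SMP set $F$ is trivial if $G-F$ has an isolated vertex and $F$ contains an even number of vertices. $G$ is even strongly super matched if it is strongly maximally matched and every optimal SMP set containing an even number of vertices is trivial. A fractional perfect matching of $G$ is $f:E(G)\to[0,1]$ with $\sum_{e\ni v}f(e)=1$ for every vertex $v$. A fractional strong matching preclusion (FSMP) set is $F\subseteq V(G)\cup E(G)$ with $G-F$ having no fractional perfect matching; $fsmp(G)$ is the minimum size of an FSMP set, and an FSMP set of that size is optimal. $G$ is fractional strongly maximally matched if $fsmp(G)=\delta(G)$, and fractional strongly super matched if in addition $G-F$ has an isolated vertex for every optimal FSMP set $F$. *)

theory Defs
  imports Complex_Main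
begin

text \<open>A (finite simple) graph is a pair (V, E) of a vertex set and a set of
  2-element edges.\<close>
type_synonym 'a graph = "'a set \<times> 'a set set"

definition verts :: "'a graph \<Rightarrow> 'a set" where "verts G = fst G"
definition edges :: "'a graph \<Rightarrow> 'a set set" where "edges G = snd G"

fun aq_adj :: "bool list \<Rightarrow> bool list \<Rightarrow> bool" where
  "aq_adj [] [] = False"
| "aq_adj (a # u) (b # v) =
     (length u = length v \<and>
      (if a = b then aq_adj u v else (u = v \<or> list_all2 (\<noteq>) u v)))"
| "aq_adj _ _ = False"

definition AQ :: "nat \<Rightarrow> bool list graph" where
  "AQ n = ({xs. length xs = n},
           {{u, v} | u v. length u = n \<and> length v = n \<and> aq_adj u v})"

definition graph_image :: "('b \<Rightarrow> 'a) \<Rightarrow> 'b graph \<Rightarrow> 'a graph" where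
  "graph_image f G = (f ` verts G, (\<lambda>e. f ` e) ` edges G)"

definition perfect_matching_between :: "'a set set \<Rightarrow> 'a set \<Rightarrow> 'a set \<Rightarrow> bool" where
  "perfect_matching_between M V1 V2 \<longleftrightarrow>
     (\<forall>e\<in>M. \<exists>u\<in>V1. \<exists>v\<in>V2. e = {u, v}) \<and>
     (\<forall>x\<in>V1 \<union> V2. \<exists>!e. e \<in> M \<and> x \<in> e)"

inductive gaq :: "nat \<Rightarrow> 'a graph \<Rightarrow> bool" where
  base: "inj_on f (verts (AQ 4)) \<Longrightarrow> gaq 4 (graph_image f (AQ 4))"
| step: "\<lbrakk> gaq n (V1, E1); gaq n (V2, E2); V1 \<inter> V2 = {};
          perfect_matching_between M1 V1 V2; perfect_matching_between M2 V1 V2;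
          M1 \<inter> M2 = {} \<rbrakk>
         \<Longrightarrow> gaq (Suc n) (V1 \<union> V2, E1 \<union> E2 \<union> M1 \<union> M2)"

text \<open>Fault sets F \<subseteq> V(G) \<union> E(G), represented as a pair (vertex faults, edge faults).\<close>
definition fault_set :: "'a graph \<Rightarrow> 'a set \<times> 'a set set \<Rightarrow> bool" where
  "fault_set G F \<longleftrightarrow> fst F \<subseteq> verts G \<and> snd F \<subseteq> edges G"

definition fsize :: "'a set \<times> 'a set set \<Rightarrow> nat" where
  "fsize F = card (fst F) + card (snd F)"

definition delete :: "'a graph \<Rightarrow> 'a set \<times> 'a set set \<Rightarrow> 'a graph" where
  "delete G F = (verts G - fst F, {e \<in> edges G - snd F. e \<inter> fst F = {}})"

definition degree :: "'a graph \<Rightarrow> 'a \<Rightarrow> nat" where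
  "degree G v = card {e \<in> edges G. v \<in> e}"

definition min_degree :: "'a graph \<Rightarrow> nat" where
  "min_degree G = Min (degree G ` verts G)"

definition has_isolated_vertex :: "'a graph \<Rightarrow> bool" where
  "has_isolated_vertex G \<longleftrightarrow> (\<exists>v\<in>verts G. \<forall>e\<in>edges G. v \<notin> e)"

definition matching :: "'a graph \<Rightarrow> 'a set set \<Rightarrow> bool" where
  "matching G M \<longleftrightarrow> M \<subseteq> edges G \<and> (\<forall>e1\<in>M. \<forall>e2\<in>M. e1 \<noteq> e2 \<longrightarrow> e1 \<inter> e2 = {})"

definition perfect_matching :: "'a graph \<Rightarrow> 'a set set \<Rightarrow> bool" where
  "perfect_matching G M \<longleftrightarrow> matching G M \<and> \<Union>M = verts G"

definition almost_perfect_matching :: "'a graph \<Rightarrow> 'a set set \<Rightarrow> bool" where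
  "almost_perfect_matching G M \<longleftrightarrow> matching G M \<and> (\<exists>v\<in>verts G. \<Union>M = verts G - {v})"

definition fractional_perfect_matching :: "'a graph \<Rightarrow> ('a set \<Rightarrow> real) \<Rightarrow> bool" where
  "fractional_perfect_matching G f \<longleftrightarrow>
     (\<forall>e\<in>edges G. 0 \<le> f e \<and> f e \<le> 1) \<and>
     (\<forall>v\<in>verts G. (\<Sum>e\<in>{e \<in> edges G. v \<in> e}. f e) = 1)"

definition smp_set :: "'a graph \<Rightarrow> 'a set \<times> 'a set set \<Rightarrow> bool" where
  "smp_set G F \<longleftrightarrow> fault_set G F \<and>
     \<not> (\<exists>M. perfect_matching (delete G F) M) \<and>
     \<not> (\<exists>M. almost_perfect_matching (delete G F) M)"

definition smp :: "'a graph \<Rightarrow> nat" where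
  "smp G = (LEAST k. \<exists>F. smp_set G F \<and> fsize F = k)"

definition optimal_smp_set :: "'a graph \<Rightarrow> 'a set \<times> 'a set set \<Rightarrow> bool" where
  "optimal_smp_set G F \<longleftrightarrow> smp_set G F \<and> fsize F = smp G"

definition fsmp_set :: "'a graph \<Rightarrow> 'a set \<times> 'a set set \<Rightarrow> bool" where
  "fsmp_set G F \<longleftrightarrow> fault_set G F \<and>
     \<not> (\<exists>f. fractional_perfect_matching (delete G F) f)"

definition fsmp :: "'a graph \<Rightarrow> nat" where
  "fsmp G = (LEAST k. \<exists>F. fsmp_set G F \<and> fsize F = k)"

definition optimal_fsmp_set :: "'a graph \<Rightarrow> 'a set \<times> 'a set set \<Rightarrow> bool" where
  "optimal_fsmp_set G F \<longleftrightarrow> fsmp_set G F \<and> fsize F = fsmp G"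

definition strongly_maximally_matched :: "'a graph \<Rightarrow> bool" where
  "strongly_maximally_matched G \<longleftrightarrow> smp G = min_degree G"

definition trivial_optimal_smp_set :: "'a graph \<Rightarrow> 'a set \<times> 'a set set \<Rightarrow> bool" where
  "trivial_optimal_smp_set G F \<longleftrightarrow>
     optimal_smp_set G F \<and> has_isolated_vertex (delete G F) \<and> even (card (fst F))"

definition even_strongly_super_matched :: "'a graph \<Rightarrow> bool" where
  "even_strongly_super_matched G \<longleftrightarrow> strongly_maximally_matched G \<and>
     (\<forall>F. optimal_smp_set G F \<and> even (card (fst F)) \<longrightarrow> trivial_optimal_smp_set G F)"

definition fractional_strongly_maximally_matched :: "'a graph \<Rightarrow> bool" where
  "fractional_strongly_maximally_matched G \<longleftrightarrow> fsmp G = min_degree G"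

definition fractional_strongly_super_matched :: "'a graph \<Rightarrow> bool" where
  "fractional_strongly_super_matched G \<longleftrightarrow> fractional_strongly_maximally_matched G \<and>
     (\<forall>F. optimal_fsmp_set G F \<longrightarrow> has_isolated_vertex (delete G F))"

end

theory Submission
  imports Defs
begin

text \<open>Every graph of \<open>GAQ\<^sub>n\<close> is simple, \<open>(2n-1)\<close>-regular and of even order, and two vertices have at most
  \<open>2n-4\<close> common neighbours; besides the two induction hypotheses, this is all the proof uses. A
  regular graph is fractional strongly super matched once every fault set of size at most the degree
  that leaves no isolated vertex leaves a fractional perfect matching.

  So let \<open>G\<close> be glued from halves \<open>G\<^sub>1\<close>, \<open>G\<^sub>2\<close> by two perfect matchings, with at most \<open>2n-1\<close>
  faults, \<open>G\<^sub>1\<close> carrying at least as many as \<open>G\<^sub>2\<close>. If \<open>G\<^sub>1\<close> carries at most \<open>2n-4\<close>, both halves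
  keep fractional perfect matchings. Otherwise one restores a faulty vertex or edge of \<open>G\<^sub>1\<close>, or
  deletes its isolated vertex, or (with all \<open>2n-1\<close> faults in \<open>G\<^sub>1\<close>) takes a perfect matching of \<open>G\<^sub>1\<close>
  after deleting an even part of the faults. This yields a fractional matching of the damaged \<open>G\<^sub>1\<close>
  that misses a little weight at few vertices; that weight is carried to \<open>G\<^sub>2\<close> along surviving
  cross edges. \<open>G\<^sub>2\<close> absorbs it because it stays fractionally perfectly matchable after a few further
  vertex deletions, and convex combinations of those matchings have any prescribed small deficiency.\<close>

definition neighbours :: "'a graph \<Rightarrow> 'a \<Rightarrow> 'a set" where
  "neighbours G x = {w. {x, w} \<in> edges G}"

definition simple_edges :: "'a set \<Rightarrow> 'a set set \<Rightarrow> bool" where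
  "simple_edges V E \<longleftrightarrow> (\<forall>e\<in>E. \<exists>u v. u \<noteq> v \<and> u \<in> V \<and> v \<in> V \<and> e = {u, v})"

lemma verts_pair [simp]: "verts (V, E) = V"
  by (simp add: verts_def)

lemma edges_pair [simp]: "edges (V, E) = E"
  by (simp add: edges_def)

lemma verts_delete [simp]: "verts (delete G F) = verts G - fst F"
  by (simp add: delete_def verts_def)

lemma edges_delete [simp]: "edges (delete G F) = {e \<in> edges G - snd F. e \<inter> fst F = {}}"
  by (simp add: delete_def edges_def)

lemma no_isolated_vertexI:
  "(\<And>v. v \<in> verts H \<Longrightarrow> \<exists>e\<in>edges H. v \<in> e) \<Longrightarrow> \<not> has_isolated_vertex H"
  unfolding has_isolated_vertex_def by blast

lemma simple_edgesE:
  assumes "simple_edges V E" "e \<in> E"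
  obtains u v where "u \<noteq> v" "u \<in> V" "v \<in> V" "e = {u, v}"
  using assms unfolding simple_edges_def by meson

lemma simple_edges_subset: "simple_edges V E \<Longrightarrow> e \<in> E \<Longrightarrow> e \<subseteq> V"
  by (erule simple_edgesE) auto

lemma simple_edges_card: "simple_edges V E \<Longrightarrow> e \<in> E \<Longrightarrow> card e = 2"
  by (erule simple_edgesE) auto

lemma simple_edges_eq:
  "simple_edges V E \<Longrightarrow> e \<in> E \<Longrightarrow> x \<in> e \<Longrightarrow> z \<in> e \<Longrightarrow> x \<noteq> z \<Longrightarrow> e = {x, z}"
  by (erule simple_edgesE) auto

lemma simple_edges_finite: "finite V \<Longrightarrow> simple_edges V E \<Longrightarrow> finite E"
  by (metis Pow_iff finite_Pow_iff finite_subset simple_edges_subset subsetI)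

lemma simple_edges_star:
  assumes "simple_edges V E"
  shows "{e \<in> E. v \<in> e} = (\<lambda>w. {v, w}) ` {w. {v, w} \<in> E}"
proof
  show "{e \<in> E. v \<in> e} \<subseteq> (\<lambda>w. {v, w}) ` {w. {v, w} \<in> E}"
  proof
    fix e assume e: "e \<in> {e \<in> E. v \<in> e}"
    then obtain a b where "e = {a, b}" using assms by (auto elim: simple_edgesE)
    with e have "e = {v, if v = a then b else a}" by auto
    with e show "e \<in> (\<lambda>w. {v, w}) ` {w. {v, w} \<in> E}" by auto
  qed
qed auto

lemma card_star_eq_card_neighbours:
  assumes "simple_edges (verts G) (edges G)"
  shows "card {e \<in> edges G. v \<in> e} = card (neighbours G v)"
proof -
  have "inj_on (\<lambda>w. {v, w}) (neighbours G v)"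
    unfolding inj_on_def by (simp add: doubleton_eq_iff)
  then show ?thesis
    using simple_edges_star[OF assms, of v] by (simp add: card_image neighbours_def)
qed

lemma matching_card_Union:
  assumes "finite V" "simple_edges V E" "matching (delete (V, E) F) M"
  shows "card (\<Union>M) = 2 * card M"
proof -
  have ME: "M \<subseteq> E" using assms(3) unfolding matching_def by auto
  then have "finite M" using simple_edges_finite[OF assms(1,2)] finite_subset by blast
  have "pairwise disjnt M" using assms(3) unfolding matching_def pairwise_def disjnt_def by blast
  moreover have "\<And>e. e \<in> M \<Longrightarrow> card e = 2" using ME simple_edges_card[OF assms(2)] by blast
  ultimately have "card (\<Union>M) = (\<Sum>e\<in>M. 2)"
    by (subst card_Union_disjoint) (auto intro: card_ge_0_finite)
  then show ?thesis by simp
qed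


section \<open>The invariant of generalized augmented cubes\<close>

text \<open>Gluing two halves preserves this invariant because every vertex gains exactly two cross
  neighbours.\<close>

definition gaq_invariant :: "nat \<Rightarrow> 'a graph \<Rightarrow> bool" where
  "gaq_invariant m G \<longleftrightarrow> m \<ge> 4 \<and> finite (verts G) \<and> simple_edges (verts G) (edges G) \<and>
     card (verts G) = 2^m \<and>
     (\<forall>x\<in>verts G. card (neighbours G x) = 2*m - 1) \<and>
     (\<forall>x\<in>verts G. \<forall>u\<in>verts G. x \<noteq> u \<longrightarrow> card (neighbours G x \<inter> neighbours G u) \<le> 2*m - 4)"

lemma gaq_invariant_degree:
  assumes "gaq_invariant m G" "v \<in> verts G"
  shows "degree G v = 2*m - 1"
  using assms card_star_eq_card_neighbours[of G v] unfolding gaq_invariant_def degree_def by simp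

lemma gaq_invariant_min_degree:
  assumes "gaq_invariant m G"
  shows "min_degree G = 2*m - 1"
proof -
  have "verts G \<noteq> {}" using assms unfolding gaq_invariant_def by auto
  then have "degree G ` verts G = {2*m - 1}" using gaq_invariant_degree[OF assms] by auto
  then show ?thesis unfolding min_degree_def by simp
qed

definition aq4_vertices :: "bool list list" where
  "aq4_vertices = List.n_lists 4 [False, True]"

lemma set_aq4_vertices: "set aq4_vertices = {xs. length xs = 4}"
  by (auto simp: aq4_vertices_def set_n_lists)

lemma distinct_aq4_vertices: "distinct aq4_vertices"
  unfolding aq4_vertices_def by code_simp

lemma length_aq4_vertices: "length aq4_vertices = 16"
  unfolding aq4_vertices_def by code_simp

lemma aq4_degree: "\<forall>x\<in>set aq4_vertices. length (filter (aq_adj x) aq4_vertices) = 7"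
  by code_simp

lemma aq4_common_neighbours:
  "\<forall>x\<in>set aq4_vertices. \<forall>u\<in>set aq4_vertices. x \<noteq> u \<longrightarrow>
     length (filter (\<lambda>w. aq_adj x w \<and> aq_adj u w) aq4_vertices) \<le> 4"
  by code_simp

lemma card_aq4_vertices_filter: "card {w. length w = 4 \<and> P w} = length (filter P aq4_vertices)"
proof -
  have "{w. length w = 4 \<and> P w} = set (filter P aq4_vertices)"
    using set_aq4_vertices by auto
  then show ?thesis using distinct_card[OF distinct_filter[OF distinct_aq4_vertices]] by simp
qed

lemma aq_adj_irrefl: "\<not> aq_adj u u"
  by (induction u) auto

lemma aq_adj_sym: "aq_adj u v \<Longrightarrow> aq_adj v u"
  by (induction u v rule: aq_adj.induct) (auto simp: list_all2_conv_all_nth)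

lemma neighbours_AQ4_image:
  assumes inj: "inj_on f {xs. length xs = 4}" and x: "length x = 4"
  shows "neighbours (graph_image f (AQ 4)) (f x) = f ` {w. length w = 4 \<and> aq_adj x w}"
proof
  let ?E = "{{u, v} | u v. length u = 4 \<and> length v = 4 \<and> aq_adj u v}"
  have eG: "edges (graph_image f (AQ 4)) = (\<lambda>e. f ` e) ` ?E"
    by (simp add: graph_image_def edges_def AQ_def)
  show "neighbours (graph_image f (AQ 4)) (f x) \<subseteq> f ` {w. length w = 4 \<and> aq_adj x w}"
  proof
    fix y assume "y \<in> neighbours (graph_image f (AQ 4)) (f x)"
    then obtain u v where uv: "length u = 4" "length v = 4" "aq_adj u v" "{f x, y} = {f u, f v}"
      unfolding neighbours_def eG by auto
    then consider "f x = f u" "y = f v" | "f x = f v" "y = f u" by (auto simp: doubleton_eq_iff)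
    then show "y \<in> f ` {w. length w = 4 \<and> aq_adj x w}"
    proof cases
      case 1
      then have "x = u" using inj_onD[OF inj] x uv by auto
      with 1 uv show ?thesis by auto
    next
      case 2
      then have "x = v" using inj_onD[OF inj] x uv by auto
      with 2 uv aq_adj_sym show ?thesis by auto
    qed
  qed
  show "f ` {w. length w = 4 \<and> aq_adj x w} \<subseteq> neighbours (graph_image f (AQ 4)) (f x)"
  proof
    fix y assume "y \<in> f ` {w. length w = 4 \<and> aq_adj x w}"
    then obtain w where w: "length w = 4" "aq_adj x w" "y = f w" by auto
    then have "{x, w} \<in> ?E" using x by auto
    moreover have "{f x, y} = f ` {x, w}" using w by simp
    ultimately show "y \<in> neighbours (graph_image f (AQ 4)) (f x)"
      unfolding neighbours_def eG by blast
  qed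
qed

lemma gaq_invariant_AQ4_image:
  assumes inj: "inj_on f (verts (AQ 4))"
  shows "gaq_invariant 4 (graph_image f (AQ 4))"
proof -
  let ?V = "{xs::bool list. length xs = 4}" and ?G = "graph_image f (AQ 4)"
  have inj': "inj_on f ?V" using inj by (simp add: AQ_def verts_def)
  have vG: "verts ?G = f ` ?V" by (simp add: graph_image_def verts_def AQ_def)
  have eG: "edges ?G = (\<lambda>e. f ` e) ` {{u, v} | u v. length u = 4 \<and> length v = 4 \<and> aq_adj u v}"
    by (simp add: graph_image_def edges_def AQ_def)
  have card_image_filter: "card (f ` {w. length w = 4 \<and> P w}) = length (filter P aq4_vertices)" for P
  proof -
    have "inj_on f {w. length w = 4 \<and> P w}" by (rule inj_on_subset[OF inj']) blast
    then show ?thesis by (simp add: card_image card_aq4_vertices_filter)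
  qed
  have "simple_edges (verts ?G) (edges ?G)"
    unfolding simple_edges_def
  proof
    fix e assume "e \<in> edges ?G"
    then obtain u v where uv: "length u = 4" "length v = 4" "aq_adj u v" "e = {f u, f v}"
      unfolding eG by auto
    have "u \<noteq> v" using uv(3) aq_adj_irrefl by metis
    then have "f u \<noteq> f v" using inj_onD[OF inj'] uv(1,2) by auto
    then show "\<exists>a b. a \<noteq> b \<and> a \<in> verts ?G \<and> b \<in> verts ?G \<and> e = {a, b}"
      using uv vG by auto
  qed
  moreover have "card (verts ?G) = 2^4"
    using card_image_filter[of "\<lambda>_. True"] length_aq4_vertices by (simp add: vG)
  moreover have "card (neighbours ?G y) = 2*4 - 1" if y: "y \<in> verts ?G" for y
  proof -
    obtain x where x: "length x = 4" "y = f x" using y vG by auto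
    then have "card (neighbours ?G y) = length (filter (aq_adj x) aq4_vertices)"
      using neighbours_AQ4_image[OF inj'] card_image_filter by simp
    then show ?thesis using aq4_degree x by (simp add: set_aq4_vertices)
  qed
  moreover have "card (neighbours ?G y \<inter> neighbours ?G y') \<le> 2*4 - 4"
    if y: "y \<in> verts ?G" "y' \<in> verts ?G" "y \<noteq> y'" for y y'
  proof -
    obtain x x' where x: "length x = 4" "y = f x" "length x' = 4" "y' = f x'" "x \<noteq> x'"
      using y vG by auto
    have "neighbours ?G y \<inter> neighbours ?G y' = f ` {w. length w = 4 \<and> aq_adj x w \<and> aq_adj x' w}"
      using x neighbours_AQ4_image[OF inj']
        inj_on_image_Int[OF inj', of "{w. length w = 4 \<and> aq_adj x w}" "{w. length w = 4 \<and> aq_adj x' w}"]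
      by (simp add: Collect_conj_eq Int_assoc Int_left_commute)
    then have "card (neighbours ?G y \<inter> neighbours ?G y') =
        length (filter (\<lambda>w. aq_adj x w \<and> aq_adj x' w) aq4_vertices)"
      using card_image_filter by simp
    then show ?thesis using aq4_common_neighbours x by (simp add: set_aq4_vertices)
  qed
  moreover have "finite (verts ?G)" by (simp add: vG flip: set_aq4_vertices)
  ultimately show ?thesis unfolding gaq_invariant_def by (simp add: vG)
qed

lemma perfect_matching_between_swap:
  "perfect_matching_between M V1 V2 \<Longrightarrow> perfect_matching_between M V2 V1"
proof -
  assume "perfect_matching_between M V1 V2"
  then have "\<forall>e\<in>M. \<exists>u\<in>V2. \<exists>v\<in>V1. e = {u, v}" "\<forall>x\<in>V2 \<union> V1. \<exists>!e. e \<in> M \<and> x \<in> e"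
    unfolding perfect_matching_between_def by (metis insert_commute, simp add: Un_commute)
  then show ?thesis unfolding perfect_matching_between_def by blast
qed

lemma perfect_matching_between_edge:
  "perfect_matching_between M V1 V2 \<Longrightarrow> e \<in> M \<Longrightarrow> \<exists>u\<in>V1. \<exists>v\<in>V2. e = {u, v}"
  unfolding perfect_matching_between_def by blast

lemma perfect_matching_between_partner:
  assumes pm: "perfect_matching_between M V1 V2" and "V1 \<inter> V2 = {}" and x: "x \<in> V1"
  shows "\<exists>v\<in>V2. {w. {x, w} \<in> M} = {v}"
proof -
  have "\<exists>!e. e \<in> M \<and> x \<in> e" using pm x unfolding perfect_matching_between_def by simp
  then obtain e where e: "e \<in> M" "x \<in> e" and uniq: "\<And>e'. e' \<in> M \<Longrightarrow> x \<in> e' \<Longrightarrow> e' = e"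
    by (elim ex1E) blast
  obtain a b where ab: "a \<in> V1" "b \<in> V2" "e = {a, b}"
    using perfect_matching_between_edge[OF pm e(1)] by blast
  have xa: "x = a" and xb: "x \<noteq> b" using e(2) ab assms(2) x by auto
  have "w = b" if "{x, w} \<in> M" for w
  proof -
    have "{x, w} = {a, b}" using uniq[OF that] ab(3) by simp
    then show ?thesis using xa xb by (auto simp: doubleton_eq_iff)
  qed
  moreover have "{x, b} \<in> M" using e(1) ab(3) xa by simp
  ultimately have "{w. {x, w} \<in> M} = {b}" by blast
  with ab show ?thesis by blast
qed

locale glued_pair =
  fixes V1 :: "'a set" and E1 :: "'a set set" and V2 :: "'a set" and E2 :: "'a set set"
    and M1 M2 :: "'a set set"
  assumes finite_V1: "finite V1" and finite_V2: "finite V2"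
    and simple_E1: "simple_edges V1 E1" and simple_E2: "simple_edges V2 E2"
    and disjoint: "V1 \<inter> V2 = {}"
    and match1: "perfect_matching_between M1 V1 V2" and match2: "perfect_matching_between M2 V1 V2"
    and matchings_disjoint: "M1 \<inter> M2 = {}"
begin

abbreviation glued :: "'a graph" where
  "glued \<equiv> (V1 \<union> V2, E1 \<union> E2 \<union> M1 \<union> M2)"

lemma swap: "glued_pair V2 E2 V1 E1 M1 M2"
proof
  show "V2 \<inter> V1 = {}" using disjoint by blast
  show "perfect_matching_between M1 V2 V1" "perfect_matching_between M2 V2 V1"
    using match1 match2 perfect_matching_between_swap by blast+
qed (fact finite_V2 finite_V1 simple_E2 simple_E1 matchings_disjoint)+

lemma glued_swap: "(V2 \<union> V1, E2 \<union> E1 \<union> M1 \<union> M2) = glued"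
  by auto

lemma E1_subset: "e \<in> E1 \<Longrightarrow> e \<subseteq> V1"
  using simple_E1 simple_edges_subset by blast

lemma E2_subset: "e \<in> E2 \<Longrightarrow> e \<subseteq> V2"
  using simple_E2 simple_edges_subset by blast

lemma E1_eq: "e \<in> E1 \<Longrightarrow> x \<in> e \<Longrightarrow> z \<in> e \<Longrightarrow> x \<noteq> z \<Longrightarrow> e = {x, z}"
  by (rule simple_edges_eq[OF simple_E1])

lemma finite_E1: "finite E1"
  using simple_edges_finite[OF finite_V1 simple_E1] .

lemma finite_E2: "finite E2"
  using simple_edges_finite[OF finite_V2 simple_E2] .

lemma cross_edgeE:
  assumes "e \<in> M1 \<union> M2"
  obtains u v where "u \<in> V1" "v \<in> V2" "e = {u, v}"
  using assms perfect_matching_between_edge[OF match1] perfect_matching_between_edge[OF match2]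
  by blast

lemma finite_M: "finite (M1 \<union> M2)"
proof -
  have "e \<subseteq> V1 \<union> V2" if "e \<in> M1 \<union> M2" for e
    using that by (rule cross_edgeE) auto
  then have "M1 \<union> M2 \<subseteq> Pow (V1 \<union> V2)" by blast
  then show ?thesis using finite_V1 finite_V2 finite_subset by blast
qed

lemma cross_notin_E1: "e \<in> M1 \<union> M2 \<Longrightarrow> e \<notin> E1"
proof (elim cross_edgeE)
  fix u v assume "u \<in> V1" "v \<in> V2" "e = {u, v}"
  then show "e \<notin> E1" using E1_subset disjoint by blast
qed

lemma cross_notin_E2: "e \<in> M1 \<union> M2 \<Longrightarrow> e \<notin> E2"
proof (elim cross_edgeE)
  fix u v assume "u \<in> V1" "v \<in> V2" "e = {u, v}"
  then show "e \<notin> E2" using E2_subset disjoint by blast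
qed

lemma E1_notin_E2: "e \<in> E1 \<Longrightarrow> e \<notin> E2"
  by (metis E1_subset E2_subset disjoint disjoint_iff simple_E1 simple_edgesE insertI1 subsetD)

lemma cross_partner:
  assumes "w \<in> V1" "{w, v} \<in> M1 \<union> M2"
  shows "v \<in> V2"
proof -
  obtain a b where "a \<in> V1" "b \<in> V2" "{w, v} = {a, b}" using assms(2) by (rule cross_edgeE)
  then show ?thesis using assms(1) disjoint by (auto simp: doubleton_eq_iff)
qed

lemma cross_partners:
  assumes "w \<in> V1"
  obtains v1 v2 where "v1 \<in> V2" "v2 \<in> V2" "v1 \<noteq> v2" "{w, v1} \<in> M1" "{w, v2} \<in> M2"
    "\<And>v. {w, v} \<in> M1 \<union> M2 \<Longrightarrow> v = v1 \<or> v = v2"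
proof -
  obtain v1 where v1: "v1 \<in> V2" "{v. {w, v} \<in> M1} = {v1}"
    using perfect_matching_between_partner[OF match1 disjoint assms] by blast
  obtain v2 where v2: "v2 \<in> V2" "{v. {w, v} \<in> M2} = {v2}"
    using perfect_matching_between_partner[OF match2 disjoint assms] by blast
  have "v1 \<noteq> v2" using v1 v2 matchings_disjoint by auto
  with v1 v2 show ?thesis by (intro that) auto
qed

lemma M1_partner_unique:
  assumes "w \<in> V1" "w' \<in> V1" "{w, s} \<in> M1" "{w', s} \<in> M1"
  shows "w = w'"
proof -
  have "s \<in> V2" using assms(1,3) cross_partner by blast
  then obtain u where "{x. {s, x} \<in> M1} = {u}"
    using perfect_matching_between_partner[OF perfect_matching_between_swap[OF match1]] disjoint
    by blast
  moreover have "w \<in> {x. {s, x} \<in> M1}" "w' \<in> {x. {s, x} \<in> M1}"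
    using assms(3,4) by (simp_all add: insert_commute)
  ultimately show ?thesis by simp
qed

definition cross_neighbours :: "'a \<Rightarrow> 'a set" where
  "cross_neighbours x = {w. {x, w} \<in> M1 \<union> M2}"

lemma cross_neighbours:
  assumes "x \<in> V1"
  shows "cross_neighbours x \<subseteq> V2" "card (cross_neighbours x) = 2" "finite (cross_neighbours x)"
proof -
  obtain v1 v2 where "v1 \<in> V2" "v2 \<in> V2" "v1 \<noteq> v2" "{x, v1} \<in> M1" "{x, v2} \<in> M2"
    and "\<And>v. {x, v} \<in> M1 \<union> M2 \<Longrightarrow> v = v1 \<or> v = v2"
    using cross_partners[OF assms] by blast
  then have "cross_neighbours x = {v1, v2}" unfolding cross_neighbours_def by blast
  with \<open>v1 \<in> V2\<close> \<open>v2 \<in> V2\<close> \<open>v1 \<noteq> v2\<close>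
  show "cross_neighbours x \<subseteq> V2" "card (cross_neighbours x) = 2" "finite (cross_neighbours x)"
    by auto
qed

lemma neighbours_half_subset: "neighbours (V1, E1) x \<subseteq> V1"
  using E1_subset unfolding neighbours_def by auto

lemma finite_neighbours_half: "finite (neighbours (V1, E1) x)"
  using neighbours_half_subset finite_V1 finite_subset by blast

lemma neighbours_glued:
  assumes "x \<in> V1"
  shows "neighbours glued x = neighbours (V1, E1) x \<union> cross_neighbours x"
proof -
  have "{x, w} \<notin> E2" for w using E2_subset assms disjoint by blast
  then show ?thesis unfolding neighbours_def cross_neighbours_def by auto
qed

end

context glued_pair
begin

lemma card_neighbours_glued:
  assumes "gaq_invariant m (V1, E1)" "x \<in> V1"
  shows "card (neighbours glued x) = 2*m + 1"
proof -
  have "card (neighbours (V1, E1) x) = 2*m - 1" "m \<ge> 4"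
    using assms unfolding gaq_invariant_def by simp_all
  moreover have "neighbours (V1, E1) x \<inter> cross_neighbours x = {}"
    using neighbours_half_subset cross_neighbours(1)[OF assms(2)] disjoint by blast
  ultimately show ?thesis
    using cross_neighbours[OF assms(2)] finite_neighbours_half neighbours_glued[OF assms(2)]
    by (simp add: card_Un_disjoint)
qed

lemma common_neighbours_glued_same_half:
  assumes "gaq_invariant m (V1, E1)" "x \<in> V1" "u \<in> V1" "x \<noteq> u"
  shows "card (neighbours glued x \<inter> neighbours glued u) \<le> 2*m - 2"
proof -
  let ?N = "neighbours (V1, E1)"
  have common: "card (?N x \<inter> ?N u) \<le> 2*m - 4" and "m \<ge> 4"
    using assms unfolding gaq_invariant_def by simp_all
  have "neighbours glued x \<inter> neighbours glued u \<subseteq> (?N x \<inter> ?N u) \<union> cross_neighbours x"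
    using neighbours_glued[OF assms(2)] neighbours_glued[OF assms(3)] neighbours_half_subset
      cross_neighbours(1)[OF assms(3)] disjoint by blast
  then have "card (neighbours glued x \<inter> neighbours glued u) \<le> card ((?N x \<inter> ?N u) \<union> cross_neighbours x)"
    using finite_neighbours_half cross_neighbours(3)[OF assms(2)] by (intro card_mono) auto
  also have "\<dots> \<le> card (?N x \<inter> ?N u) + card (cross_neighbours x)" by (rule card_Un_le)
  finally show ?thesis using common cross_neighbours(2)[OF assms(2)] \<open>m \<ge> 4\<close> by simp
qed

lemma common_neighbours_glued_other_half:
  assumes "x \<in> V1" "u \<in> V2"
  shows "card (neighbours glued x \<inter> neighbours glued u) \<le> 4"
proof -
  interpret other: glued_pair V2 E2 V1 E1 M1 M2 by (rule swap)
  have "neighbours glued u = neighbours (V2, E2) u \<union> other.cross_neighbours u"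
    using other.neighbours_glued[OF assms(2)] by (simp add: glued_swap)
  moreover have "neighbours (V1, E1) x \<inter> neighbours (V2, E2) u = {}"
    using neighbours_half_subset other.neighbours_half_subset disjoint by blast
  ultimately have "neighbours glued x \<inter> neighbours glued u \<subseteq>
      cross_neighbours x \<union> other.cross_neighbours u"
    unfolding neighbours_glued[OF assms(1)] by blast
  then have "card (neighbours glued x \<inter> neighbours glued u) \<le>
      card (cross_neighbours x \<union> other.cross_neighbours u)"
    using cross_neighbours(3)[OF assms(1)] other.cross_neighbours(3)[OF assms(2)]
    by (intro card_mono) auto
  also have "\<dots> \<le> card (cross_neighbours x) + card (other.cross_neighbours u)" by (rule card_Un_le)
  finally show ?thesis
    using cross_neighbours(2)[OF assms(1)] other.cross_neighbours(2)[OF assms(2)] by simp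
qed

lemma gaq_invariant_glued:
  assumes inv1: "gaq_invariant m (V1, E1)" and inv2: "gaq_invariant m (V2, E2)"
  shows "gaq_invariant (Suc m) glued"
proof -
  interpret other: glued_pair V2 E2 V1 E1 M1 M2 by (rule swap)
  have "m \<ge> 4" using inv1 unfolding gaq_invariant_def by simp
  have "simple_edges (V1 \<union> V2) (E1 \<union> E2 \<union> M1 \<union> M2)"
    unfolding simple_edges_def
  proof
    fix e assume "e \<in> E1 \<union> E2 \<union> M1 \<union> M2"
    then consider "e \<in> E1" | "e \<in> E2" | "e \<in> M1 \<union> M2" by blast
    then show "\<exists>u v. u \<noteq> v \<and> u \<in> V1 \<union> V2 \<and> v \<in> V1 \<union> V2 \<and> e = {u, v}"
    proof cases
      case 3
      then obtain u v where uv: "u \<in> V1" "v \<in> V2" "e = {u, v}" by (rule cross_edgeE)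
      then have "u \<noteq> v" using disjoint by blast
      with uv show ?thesis by blast
    qed (use simple_E1 simple_E2 in \<open>auto elim!: simple_edgesE\<close>)
  qed
  moreover have "card (V1 \<union> V2) = 2 ^ Suc m"
    using inv1 inv2 disjoint finite_V1 finite_V2 unfolding gaq_invariant_def
    by (simp add: card_Un_disjoint)
  moreover have "card (neighbours glued x) = 2 * Suc m - 1" if "x \<in> V1 \<union> V2" for x
    using that card_neighbours_glued[OF inv1] other.card_neighbours_glued[OF inv2]
    by (auto simp: glued_swap)
  moreover have "card (neighbours glued x \<inter> neighbours glued u) \<le> 2 * Suc m - 4"
    if "x \<in> V1 \<union> V2" "u \<in> V1 \<union> V2" "x \<noteq> u" for x u
  proof -
    have "card (neighbours glued x \<inter> neighbours glued u) \<le> max (2*m - 2) 4"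
      using that common_neighbours_glued_same_half[OF inv1]
        other.common_neighbours_glued_same_half[OF inv2] common_neighbours_glued_other_half
        other.common_neighbours_glued_other_half
      by (auto simp: glued_swap le_max_iff_disj)
    then show ?thesis using \<open>m \<ge> 4\<close> by simp
  qed
  ultimately show ?thesis
    using \<open>m \<ge> 4\<close> finite_V1 finite_V2 unfolding gaq_invariant_def by simp
qed

end

lemma gaq_invariant: "gaq m G \<Longrightarrow> gaq_invariant m G"
proof (induction rule: gaq.induct)
  case (base f)
  then show ?case by (rule gaq_invariant_AQ4_image)
next
  case (step n V1 E1 V2 E2 M1 M2)
  then interpret glued_pair V1 E1 V2 E2 M1 M2
    by unfold_locales (auto simp: gaq_invariant_def)
  show ?case using gaq_invariant_glued[OF step.IH] .
qed

lemma fsmp_le: "fsmp_set G F \<Longrightarrow> fsmp G \<le> fsize F"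
  unfolding fsmp_def by (rule Least_le) blast

lemma smp_le: "smp_set G F \<Longrightarrow> smp G \<le> fsize F"
  unfolding smp_def by (rule Least_le) blast

lemma fractional_strongly_super_matched_fpm:
  assumes "fractional_strongly_super_matched G" "fault_set G F" "fsize F \<le> min_degree G"
    and "fsize F < min_degree G \<or> \<not> has_isolated_vertex (delete G F)"
  shows "\<exists>f. fractional_perfect_matching (delete G F) f"
proof (rule ccontr)
  assume "\<not> ?thesis"
  with assms(2) have F: "fsmp_set G F" unfolding fsmp_set_def by blast
  have fsmp: "fsmp G = min_degree G"
    using assms(1) unfolding fractional_strongly_super_matched_def
      fractional_strongly_maximally_matched_def by simp
  with F assms(3) have "fsize F = min_degree G" "optimal_fsmp_set G F"
    using fsmp_le[OF F] unfolding optimal_fsmp_set_def by simp_all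
  moreover have "has_isolated_vertex (delete G F)"
    using assms(1) \<open>optimal_fsmp_set G F\<close> unfolding fractional_strongly_super_matched_def by blast
  ultimately show False using assms(4) by simp
qed

text \<open>A fault set below \<open>smp G\<close> with an even number of vertices leaves an even number of vertices,
  so it cannot destroy all perfect matchings while leaving an almost-perfect one.\<close>

lemma strongly_maximally_matched_perfect_matching:
  assumes smm: "strongly_maximally_matched G"
    and fin: "finite (verts G)" and simple: "simple_edges (verts G) (edges G)"
    and even_G: "even (card (verts G))"
    and F: "fault_set G F" "fsize F < min_degree G" "even (card (fst F))"
  shows "\<exists>M. perfect_matching (delete G F) M"
proof (rule ccontr)
  assume no_pm: "\<not> ?thesis"
  have "\<not> smp_set G F"
    using smp_le F(2) smm unfolding strongly_maximally_matched_def by fastforce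
  then obtain M where "almost_perfect_matching (delete G F) M"
    using no_pm F(1) unfolding smp_set_def by blast
  then obtain v where v: "v \<in> verts G - fst F" "\<Union>M = verts G - fst F - {v}"
    and "matching (delete G F) M"
    unfolding almost_perfect_matching_def by auto
  then have M: "matching (delete (verts G, edges G) F) M" by (simp add: verts_def edges_def)
  have sub: "fst F \<subseteq> verts G" using F(1) unfolding fault_set_def by simp
  then have "card (verts G - fst F) = card (verts G) - card (fst F)"
    using fin by (meson card_Diff_subset finite_subset)
  moreover have "card (fst F) \<le> card (verts G)" using sub fin card_mono by blast
  moreover have "card (verts G - fst F) > 0" using v fin by (metis card_gt_0_iff empty_iff finite_Diff)
  moreover have "2 * card M = card (verts G - fst F) - 1"
    using matching_card_Union[OF fin simple M] v fin by (simp add: card_Diff_singleton)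
  ultimately show False using even_G F(3) by presburger
qed

lemma fpm_zero_extension:
  assumes finE: "finite E" and h: "fractional_perfect_matching (delete (V, E) (A \<union> Z, B)) h"
  defines "hz \<equiv> \<lambda>e. if e \<inter> Z = {} then h e else 0"
  shows "\<forall>e\<in>{e \<in> E - B. e \<inter> A = {}}. 0 \<le> hz e \<and> hz e \<le> 1"
    and "\<forall>v\<in>V - A. (\<Sum>e\<in>{e \<in> {e \<in> E - B. e \<inter> A = {}}. v \<in> e}. hz e) = (if v \<in> Z then 0 else 1)"
proof -
  let ?EH = "{e \<in> E - B. e \<inter> A = {}}"
  show "\<forall>e\<in>?EH. 0 \<le> hz e \<and> hz e \<le> 1"
  proof
    fix e assume e: "e \<in> ?EH"
    show "0 \<le> hz e \<and> hz e \<le> 1"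
    proof (cases "e \<inter> Z = {}")
      case True
      then have "e \<in> edges (delete (V, E) (A \<union> Z, B))" using e by auto
      then show ?thesis using h True unfolding hz_def fractional_perfect_matching_def by auto
    qed (simp add: hz_def)
  qed
  show "\<forall>v\<in>V - A. (\<Sum>e\<in>{e \<in> ?EH. v \<in> e}. hz e) = (if v \<in> Z then 0 else 1)"
  proof
    fix v assume v: "v \<in> V - A"
    show "(\<Sum>e\<in>{e \<in> ?EH. v \<in> e}. hz e) = (if v \<in> Z then 0 else 1)"
    proof (cases "v \<in> Z")
      case True
      then have "hz e = 0" if "v \<in> e" for e using that unfolding hz_def by auto
      then show ?thesis using True by (auto intro!: sum.neutral)
    next
      case False
      have "(\<Sum>e\<in>{e \<in> ?EH. v \<in> e}. hz e) = (\<Sum>e\<in>{e \<in> ?EH. v \<in> e} \<inter> {e. e \<inter> Z = {}}. h e)"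
        unfolding hz_def using finE by (simp add: sum.inter_restrict)
      also have "{e \<in> ?EH. v \<in> e} \<inter> {e. e \<inter> Z = {}} = {e \<in> edges (delete (V, E) (A \<union> Z, B)). v \<in> e}"
        by auto
      also have "(\<Sum>e\<in>{e \<in> edges (delete (V, E) (A \<union> Z, B)). v \<in> e}. h e) = 1"
        using h v False unfolding fractional_perfect_matching_def by auto
      finally show ?thesis using False by simp
    qed
  qed
qed

lemma convex_combination_bounds:
  fixes lam a :: "'i \<Rightarrow> real"
  assumes "finite I" "\<forall>i\<in>I. 0 \<le> lam i" "sum lam I \<le> 1"
    and "\<forall>i\<in>I. 0 \<le> a i \<and> a i \<le> 1" "0 \<le> b" "b \<le> 1"
  shows "0 \<le> (\<Sum>i\<in>I. lam i * a i) + (1 - sum lam I) * b \<and> (\<Sum>i\<in>I. lam i * a i) + (1 - sum lam I) * b \<le> 1"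
proof -
  have "0 \<le> (\<Sum>i\<in>I. lam i * a i)" using assms by (intro sum_nonneg) simp
  moreover have "(\<Sum>i\<in>I. lam i * a i) \<le> (\<Sum>i\<in>I. lam i)"
    using assms by (intro sum_mono) (simp add: mult_left_le)
  moreover have "0 \<le> (1 - sum lam I) * b" "(1 - sum lam I) * b \<le> 1 - sum lam I"
    using assms by (simp_all add: mult_left_le)
  ultimately show ?thesis by linarith
qed

lemma sum_weights_outside:
  fixes lam :: "'i \<Rightarrow> real"
  assumes "finite I"
  shows "(\<Sum>i\<in>I. lam i * (if P i then 0 else 1)) + (1 - sum lam I) = 1 - (\<Sum>i\<in>{i\<in>I. P i}. lam i)"
proof -
  have "(\<Sum>i\<in>I. lam i * (if P i then 0 else 1)) = (\<Sum>i\<in>I. lam i) - (\<Sum>i\<in>I. if P i then lam i else 0)"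
    by (simp add: sum_subtractf[symmetric]) (rule sum.cong, auto)
  also have "(\<Sum>i\<in>I. if P i then lam i else 0) = (\<Sum>i\<in>{i\<in>I. P i}. lam i)"
    using assms by (simp add: sum.inter_filter)
  finally show ?thesis by simp
qed

text \<open>A convex combination of fractional perfect matchings of \<open>H - Y\<^sub>i\<close> (extended by zero) is
  a fractional matching of \<open>H\<close> whose deficiency at \<open>v\<close> is the total weight of the \<open>Y\<^sub>i\<close>
  containing \<open>v\<close>.\<close>

lemma fractional_matching_with_deficiency:
  fixes lam :: "'i \<Rightarrow> real" and Y :: "'i \<Rightarrow> 'a set"
  assumes finE: "finite E"
    and fpm: "\<And>Z. Z \<subseteq> V - A \<Longrightarrow> card Z \<le> s \<Longrightarrow>
      \<exists>h. fractional_perfect_matching (delete (V, E) (A \<union> Z, B)) h"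
    and I: "finite I" "\<forall>i\<in>I. 0 \<le> lam i" "sum lam I \<le> 1"
    and Y: "\<forall>i\<in>I. Y i \<subseteq> V - A \<and> card (Y i) \<le> s"
  shows "\<exists>k. (\<forall>e\<in>{e \<in> E - B. e \<inter> A = {}}. 0 \<le> k e \<and> k e \<le> 1) \<and>
     (\<forall>v\<in>V - A. (\<Sum>e\<in>{e \<in> {e \<in> E - B. e \<inter> A = {}}. v \<in> e}. k e) =
        1 - (\<Sum>i\<in>{i\<in>I. v \<in> Y i}. lam i))"
proof -
  let ?EH = "{e \<in> E - B. e \<inter> A = {}}"
  define h where "h Z = (SOME h. fractional_perfect_matching (delete (V, E) (A \<union> Z, B)) h)" for Z
  define hz where "hz Z e = (if e \<inter> Z = {} then h Z e else 0)" for Z e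
  have h: "fractional_perfect_matching (delete (V, E) (A \<union> Z, B)) (h Z)"
    if "Z \<subseteq> V - A" "card Z \<le> s" for Z
    unfolding h_def using fpm[OF that] by (rule someI_ex)
  have hz_bounds: "0 \<le> hz Z e \<and> hz Z e \<le> 1" if "Z \<subseteq> V - A" "card Z \<le> s" "e \<in> ?EH" for Z e
    using bspec[OF fpm_zero_extension(1)[OF finE h[OF that(1,2)]] that(3)] unfolding hz_def by simp
  have hz_sum: "(\<Sum>e\<in>{e \<in> ?EH. v \<in> e}. hz Z e) = (if v \<in> Z then 0 else 1)"
    if "Z \<subseteq> V - A" "card Z \<le> s" "v \<in> V - A" for Z v
    using bspec[OF fpm_zero_extension(2)[OF finE h[OF that(1,2)]] that(3)] unfolding hz_def by simp
  define k where "k e = (\<Sum>i\<in>I. lam i * hz (Y i) e) + (1 - sum lam I) * hz {} e" for e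
  have "0 \<le> k e \<and> k e \<le> 1" if e: "e \<in> ?EH" for e
  proof -
    have "\<forall>i\<in>I. 0 \<le> hz (Y i) e \<and> hz (Y i) e \<le> 1" using hz_bounds Y e by blast
    moreover have "0 \<le> hz {} e" "hz {} e \<le> 1" using hz_bounds[of "{}"] e by simp_all
    ultimately show ?thesis unfolding k_def by (rule convex_combination_bounds[OF I])
  qed
  moreover have "(\<Sum>e\<in>{e \<in> ?EH. v \<in> e}. k e) = 1 - (\<Sum>i\<in>{i\<in>I. v \<in> Y i}. lam i)"
    if v: "v \<in> V - A" for v
  proof -
    have "(\<Sum>e\<in>{e \<in> ?EH. v \<in> e}. k e) = (\<Sum>i\<in>I. lam i * (\<Sum>e\<in>{e \<in> ?EH. v \<in> e}. hz (Y i) e))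
        + (1 - sum lam I) * (\<Sum>e\<in>{e \<in> ?EH. v \<in> e}. hz {} e)"
      unfolding k_def by (simp add: sum.distrib sum_distrib_left sum.swap[of _ I])
    also have "\<dots> = (\<Sum>i\<in>I. lam i * (if v \<in> Y i then 0 else 1)) + (1 - sum lam I)"
      using hz_sum[of "{}" v] v hz_sum Y by simp
    also have "\<dots> = 1 - (\<Sum>i\<in>{i\<in>I. v \<in> Y i}. lam i)"
      using sum_weights_outside[OF I(1), of lam "\<lambda>i. v \<in> Y i"] by simp
    finally show ?thesis .
  qed
  ultimately show ?thesis by blast
qed

section \<open>Assembling fractional perfect matchings of the glued graph\<close>

definition cross_weight :: "'a set \<Rightarrow> ('a \<Rightarrow> 'a) \<Rightarrow> ('a \<Rightarrow> real) \<Rightarrow> 'a set \<Rightarrow> real" where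
  "cross_weight D \<sigma> d e = (\<Sum>w\<in>D. if e = {w, \<sigma> w} then d w else 0)"

locale faulty_glued = glued_pair +
  fixes Vf :: "'a set" and Ef :: "'a set set"
begin

definition alive1 :: "'a set set" where
  "alive1 = {e \<in> E1 - Ef. e \<inter> Vf = {}}"

definition alive2 :: "'a set set" where
  "alive2 = {e \<in> E2 - Ef. e \<inter> Vf = {}}"

lemma edges_delete_half1: "edges (delete (V1, E1) (Vf \<inter> V1, Ef \<inter> E1)) = alive1"
  unfolding alive1_def using E1_subset by auto

lemma edges_delete_half2: "edges (delete (V2, E2) (Vf \<inter> V2, Ef \<inter> E2)) = alive2"
  unfolding alive2_def using E2_subset by auto

lemma finite_alive1: "finite alive1"
  using finite_E1 unfolding alive1_def by simp

lemma finite_alive2: "finite alive2"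
  using finite_E2 unfolding alive2_def by simp

lemma edges_at_V1:
  assumes "x \<in> V1"
  shows "{e \<in> edges (delete glued (Vf, Ef)). x \<in> e} =
      {e \<in> alive1. x \<in> e} \<union> {e \<in> (M1 \<union> M2) - Ef. e \<inter> Vf = {} \<and> x \<in> e}"
    and "{e \<in> alive1. x \<in> e} \<inter> {e \<in> (M1 \<union> M2) - Ef. e \<inter> Vf = {} \<and> x \<in> e} = {}"
  using E2_subset assms disjoint cross_notin_E1 unfolding alive1_def by auto

lemma edges_at_V2:
  assumes "x \<in> V2"
  shows "{e \<in> edges (delete glued (Vf, Ef)). x \<in> e} =
      {e \<in> alive2. x \<in> e} \<union> {e \<in> (M1 \<union> M2) - Ef. e \<inter> Vf = {} \<and> x \<in> e}"
    and "{e \<in> alive2. x \<in> e} \<inter> {e \<in> (M1 \<union> M2) - Ef. e \<inter> Vf = {} \<and> x \<in> e} = {}"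
  using E1_subset assms disjoint cross_notin_E2 unfolding alive2_def by auto

context
  fixes D :: "'a set" and \<sigma> :: "'a \<Rightarrow> 'a" and d :: "'a \<Rightarrow> real"
  assumes D: "D \<subseteq> V1 - Vf" "finite D"
    and \<sigma>: "\<forall>w\<in>D. \<sigma> w \<in> V2 - Vf \<and> {w, \<sigma> w} \<in> (M1 \<union> M2) - Ef"
begin

lemma cross_weight_pair:
  assumes "w0 \<in> D"
  shows "cross_weight D \<sigma> d {w0, \<sigma> w0} = d w0"
proof -
  have "({w0, \<sigma> w0} = {w, \<sigma> w}) = (w = w0)" if "w \<in> D" for w
    using that assms D \<sigma> disjoint by (auto simp: doubleton_eq_iff)
  then have "cross_weight D \<sigma> d {w0, \<sigma> w0} = (\<Sum>w\<in>D. if w = w0 then d w else 0)"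
    unfolding cross_weight_def by (intro sum.cong) auto
  also have "\<dots> = d w0" using assms D(2) by simp
  finally show ?thesis .
qed

lemma sum_cross_weight:
  "(\<Sum>e\<in>{e \<in> (M1 \<union> M2) - Ef. e \<inter> Vf = {} \<and> x \<in> e}. cross_weight D \<sigma> d e) =
     (\<Sum>w\<in>D. if x \<in> {w, \<sigma> w} then d w else 0)"
proof -
  let ?A = "{e \<in> (M1 \<union> M2) - Ef. e \<inter> Vf = {} \<and> x \<in> e}"
  have "finite ?A" using finite_M by simp
  have "(\<Sum>e\<in>?A. cross_weight D \<sigma> d e) = (\<Sum>w\<in>D. \<Sum>e\<in>?A. if e = {w, \<sigma> w} then d w else 0)"
    unfolding cross_weight_def by (rule sum.swap)
  also have "\<dots> = (\<Sum>w\<in>D. if {w, \<sigma> w} \<in> ?A then d w else 0)"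
    using \<open>finite ?A\<close> by (simp add: sum.delta)
  also have "\<dots> = (\<Sum>w\<in>D. if x \<in> {w, \<sigma> w} then d w else 0)"
    using \<sigma> D by (intro sum.cong) auto
  finally show ?thesis .
qed

text \<open>The weight \<open>d w\<close> missing at \<open>w \<in> D\<close> is put on the cross edge \<open>{w, \<sigma> w}\<close>.\<close>

definition glued_weight :: "('a set \<Rightarrow> real) \<Rightarrow> ('a set \<Rightarrow> real) \<Rightarrow> 'a set \<Rightarrow> real" where
  "glued_weight g k e = (if e \<in> E1 then g e else if e \<in> E2 then k e else cross_weight D \<sigma> d e)"

lemma sum_glued_weight_cross:
  "(\<Sum>e\<in>{e \<in> (M1 \<union> M2) - Ef. e \<inter> Vf = {} \<and> x \<in> e}. glued_weight g k e) =
     (\<Sum>w\<in>D. if x \<in> {w, \<sigma> w} then d w else 0)"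
proof -
  have "(\<Sum>e\<in>{e \<in> (M1 \<union> M2) - Ef. e \<inter> Vf = {} \<and> x \<in> e}. glued_weight g k e) =
      (\<Sum>e\<in>{e \<in> (M1 \<union> M2) - Ef. e \<inter> Vf = {} \<and> x \<in> e}. cross_weight D \<sigma> d e)"
    unfolding glued_weight_def using cross_notin_E1 cross_notin_E2 by (intro sum.cong) auto
  then show ?thesis using sum_cross_weight by simp
qed

lemma sum_glued_weight_V1:
  assumes g: "\<forall>w\<in>V1 - Vf. (\<Sum>e\<in>{e \<in> alive1. w \<in> e}. g e) = 1 - (if w \<in> D then d w else 0)"
    and x: "x \<in> V1 - Vf"
  shows "(\<Sum>e\<in>{e \<in> edges (delete glued (Vf, Ef)). x \<in> e}. glued_weight g k e) = 1"
proof -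
  have "x \<in> V1" using x by blast
  have "finite {e \<in> alive1. x \<in> e}" using finite_alive1 by simp
  then have "(\<Sum>e\<in>{e \<in> edges (delete glued (Vf, Ef)). x \<in> e}. glued_weight g k e) =
      (\<Sum>e\<in>{e \<in> alive1. x \<in> e}. glued_weight g k e) +
      (\<Sum>e\<in>{e \<in> (M1 \<union> M2) - Ef. e \<inter> Vf = {} \<and> x \<in> e}. glued_weight g k e)"
    unfolding edges_at_V1(1)[OF \<open>x \<in> V1\<close>]
    by (rule sum.union_disjoint[OF _ _ edges_at_V1(2)[OF \<open>x \<in> V1\<close>]]) (use finite_M in simp)
  also have "(\<Sum>e\<in>{e \<in> alive1. x \<in> e}. glued_weight g k e) = (\<Sum>e\<in>{e \<in> alive1. x \<in> e}. g e)"
    unfolding glued_weight_def alive1_def by (rule sum.cong) auto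
  also have "(\<Sum>e\<in>{e \<in> (M1 \<union> M2) - Ef. e \<inter> Vf = {} \<and> x \<in> e}. glued_weight g k e) =
      (\<Sum>w\<in>D. if w = x then d w else 0)"
    unfolding sum_glued_weight_cross using \<sigma> D x disjoint by (intro sum.cong) auto
  also have "\<dots> = (if x \<in> D then d x else 0)" using D(2) by (simp add: sum.delta')
  finally show ?thesis using g x by simp
qed

lemma sum_glued_weight_V2:
  assumes k: "\<forall>v\<in>V2 - Vf. (\<Sum>e\<in>{e \<in> alive2. v \<in> e}. k e) = 1 - (\<Sum>w\<in>{w\<in>D. \<sigma> w = v}. d w)"
    and x: "x \<in> V2 - Vf"
  shows "(\<Sum>e\<in>{e \<in> edges (delete glued (Vf, Ef)). x \<in> e}. glued_weight g k e) = 1"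
proof -
  have "x \<in> V2" using x by blast
  have "finite {e \<in> alive2. x \<in> e}" using finite_alive2 by simp
  then have "(\<Sum>e\<in>{e \<in> edges (delete glued (Vf, Ef)). x \<in> e}. glued_weight g k e) =
      (\<Sum>e\<in>{e \<in> alive2. x \<in> e}. glued_weight g k e) +
      (\<Sum>e\<in>{e \<in> (M1 \<union> M2) - Ef. e \<inter> Vf = {} \<and> x \<in> e}. glued_weight g k e)"
    unfolding edges_at_V2(1)[OF \<open>x \<in> V2\<close>]
    by (rule sum.union_disjoint[OF _ _ edges_at_V2(2)[OF \<open>x \<in> V2\<close>]]) (use finite_M in simp)
  also have "(\<Sum>e\<in>{e \<in> alive2. x \<in> e}. glued_weight g k e) = (\<Sum>e\<in>{e \<in> alive2. x \<in> e}. k e)"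
    unfolding glued_weight_def alive2_def using E1_notin_E2 by (intro sum.cong) auto
  also have "(\<Sum>e\<in>{e \<in> (M1 \<union> M2) - Ef. e \<inter> Vf = {} \<and> x \<in> e}. glued_weight g k e) =
      (\<Sum>w\<in>D. if \<sigma> w = x then d w else 0)"
    unfolding sum_glued_weight_cross using D x disjoint by (intro sum.cong) auto
  also have "\<dots> = (\<Sum>w\<in>{w\<in>D. \<sigma> w = x}. d w)" using D(2) by (simp add: sum.inter_filter)
  finally show ?thesis using k x by simp
qed

lemma glued_weight_bounds:
  assumes d: "\<forall>w\<in>D. 0 \<le> d w \<and> d w \<le> 1"
    and g: "\<forall>e\<in>alive1. 0 \<le> g e \<and> g e \<le> 1" and k: "\<forall>e\<in>alive2. 0 \<le> k e \<and> k e \<le> 1"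
    and e: "e \<in> edges (delete glued (Vf, Ef))"
  shows "0 \<le> glued_weight g k e \<and> glued_weight g k e \<le> 1"
proof (cases "e \<in> E1 \<union> E2")
  case True
  with e g k show ?thesis unfolding glued_weight_def alive1_def alive2_def by auto
next
  case False
  then have "glued_weight g k e = cross_weight D \<sigma> d e" unfolding glued_weight_def by simp
  moreover have "cross_weight D \<sigma> d e = 0" if "\<forall>w\<in>D. e \<noteq> {w, \<sigma> w}"
    unfolding cross_weight_def using that by simp
  ultimately show ?thesis using cross_weight_pair d by (cases "\<exists>w\<in>D. e = {w, \<sigma> w}") auto
qed

lemma fpm_glued_from_halves:
  fixes g k :: "'a set \<Rightarrow> real"
  assumes d: "\<forall>w\<in>D. 0 \<le> d w \<and> d w \<le> 1"
    and g: "\<forall>e\<in>alive1. 0 \<le> g e \<and> g e \<le> 1"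
      "\<forall>w\<in>V1 - Vf. (\<Sum>e\<in>{e \<in> alive1. w \<in> e}. g e) = 1 - (if w \<in> D then d w else 0)"
    and k: "\<forall>e\<in>alive2. 0 \<le> k e \<and> k e \<le> 1"
      "\<forall>v\<in>V2 - Vf. (\<Sum>e\<in>{e \<in> alive2. v \<in> e}. k e) = 1 - (\<Sum>w\<in>{w\<in>D. \<sigma> w = v}. d w)"
  shows "\<exists>f. fractional_perfect_matching (delete glued (Vf, Ef)) f"
proof -
  have "fractional_perfect_matching (delete glued (Vf, Ef)) (glued_weight g k)"
    unfolding fractional_perfect_matching_def
    using glued_weight_bounds[OF d g(1) k(1)] sum_glued_weight_V1[OF g(2)] sum_glued_weight_V2[OF k(2)]
    by auto
  then show ?thesis by blast
qed

end

end

section \<open>The inductive step\<close>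

locale gaq_step = faulty_glued +
  fixes n :: nat
  assumes n_ge_5: "n \<ge> 5"
    and inv1: "gaq_invariant (n - 1) (V1, E1)" and inv2: "gaq_invariant (n - 1) (V2, E2)"
    and even_super1: "even_strongly_super_matched (V1, E1)"
    and even_super2: "even_strongly_super_matched (V2, E2)"
    and fractional_super1: "fractional_strongly_super_matched (V1, E1)"
    and fractional_super2: "fractional_strongly_super_matched (V2, E2)"
begin

lemma swap_step: "gaq_step V2 E2 V1 E1 M1 M2 n"
  using swap n_ge_5 inv1 inv2 even_super1 even_super2 fractional_super1 fractional_super2
  by (simp add: gaq_step_def gaq_step_axioms_def faulty_glued_def)

lemma finite_fault_parts:
  "finite (Vf \<inter> V1)" "finite (Vf \<inter> V2)" "finite (Ef \<inter> E1)" "finite (Ef \<inter> E2)"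
  "finite (Ef \<inter> (M1 \<union> M2))"
  using finite_V1 finite_V2 finite_E1 finite_E2 finite_M by simp_all

lemma card_neighbours_half1: "x \<in> V1 \<Longrightarrow> card (neighbours (V1, E1) x) = 2*n - 3"
  using inv1 n_ge_5 unfolding gaq_invariant_def by simp

lemma card_star_half1: "x \<in> V1 \<Longrightarrow> card {e \<in> E1. x \<in> e} = 2*n - 3"
  using card_star_eq_card_neighbours[of "(V1, E1)" x] simple_E1 card_neighbours_half1 by simp

lemma common_neighbours_half1:
  assumes "x \<in> V1" "u \<in> V1" "x \<noteq> u"
  shows "card (neighbours (V1, E1) x \<inter> neighbours (V1, E1) u) \<le> 2*n - 6"
  using inv1 assms n_ge_5 unfolding gaq_invariant_def by (simp add: numeral_eq_Suc)

lemma min_degree_half1: "min_degree (V1, E1) = 2*n - 3"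
  using gaq_invariant_min_degree[OF inv1] n_ge_5 by simp

lemma half1_fpm_no_isolated:
  assumes "A \<subseteq> V1" "B \<subseteq> E1" "card A + card B \<le> 2*n - 3"
    and "\<not> has_isolated_vertex (delete (V1, E1) (A, B))"
  shows "\<exists>f. fractional_perfect_matching (delete (V1, E1) (A, B)) f"
  using fractional_strongly_super_matched_fpm[OF fractional_super1, of "(A, B)"] assms
  unfolding fault_set_def fsize_def min_degree_half1 by simp

lemma half1_fpm:
  assumes "A \<subseteq> V1" "B \<subseteq> E1" "card A + card B < 2*n - 3"
  shows "\<exists>f. fractional_perfect_matching (delete (V1, E1) (A, B)) f"
  using fractional_strongly_super_matched_fpm[OF fractional_super1, of "(A, B)"] assms
  unfolding fault_set_def fsize_def min_degree_half1 by simp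

lemma half1_perfect_matching:
  assumes "A \<subseteq> V1" "B \<subseteq> E1" "card A + card B < 2*n - 3" "even (card A)"
  shows "\<exists>M. perfect_matching (delete (V1, E1) (A, B)) M"
proof -
  have "even (card V1)" using inv1 n_ge_5 unfolding gaq_invariant_def by simp
  moreover have "strongly_maximally_matched (V1, E1)"
    using even_super1 unfolding even_strongly_super_matched_def by simp
  ultimately show ?thesis
    using assms finite_V1 simple_E1
    by (intro strongly_maximally_matched_perfect_matching[of "(V1, E1)" "(A, B)", simplified])
      (simp_all add: fault_set_def fsize_def min_degree_half1)
qed

lemma half2_fpm:
  assumes "A \<subseteq> V2" "B \<subseteq> E2" "card A + card B < 2*n - 3"
  shows "\<exists>f. fractional_perfect_matching (delete (V2, E2) (A, B)) f"
proof -
  interpret other: gaq_step V2 E2 V1 E1 M1 M2 Vf Ef n by (rule swap_step)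
  show ?thesis using other.half1_fpm[OF assms] .
qed

text \<open>Room for \<open>s\<close> further vertex deletions in the second half is what lets it absorb the weight
  arriving along cross edges (via \<open>fractional_matching_with_deficiency\<close>).\<close>

lemma half2_fpm_extra_deletions:
  assumes "card (Vf \<inter> V2) + card (Ef \<inter> E2) + s \<le> 2*n - 4"
    and "Z \<subseteq> V2 - (Vf \<inter> V2)" "card Z \<le> s"
  shows "\<exists>h. fractional_perfect_matching (delete (V2, E2) ((Vf \<inter> V2) \<union> Z, Ef \<inter> E2)) h"
proof -
  have "card ((Vf \<inter> V2) \<union> Z) \<le> card (Vf \<inter> V2) + card Z" by (rule card_Un_le)
  then have "card ((Vf \<inter> V2) \<union> Z) + card (Ef \<inter> E2) < 2*n - 3" using assms n_ge_5 by linarith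
  then show ?thesis by (rule half2_fpm[rotated 2]) (use assms(2) in auto)
qed

lemma half2_deficiency:
  fixes lam :: "'i \<Rightarrow> real"
  assumes "card (Vf \<inter> V2) + card (Ef \<inter> E2) + s \<le> 2*n - 4"
    and "finite I" "\<forall>i\<in>I. 0 \<le> lam i" "sum lam I \<le> 1"
    and "\<forall>i\<in>I. Y i \<subseteq> V2 - Vf \<and> card (Y i) \<le> s"
  shows "\<exists>k. (\<forall>e\<in>alive2. 0 \<le> k e \<and> k e \<le> 1) \<and>
    (\<forall>v\<in>V2 - Vf. (\<Sum>e\<in>{e \<in> alive2. v \<in> e}. k e) = 1 - (\<Sum>i\<in>{i\<in>I. v \<in> Y i}. lam i))"
proof -
  have alive2: "{e \<in> E2 - (Ef \<inter> E2). e \<inter> (Vf \<inter> V2) = {}} = alive2"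
    unfolding alive2_def using E2_subset by auto
  have V2: "V2 - Vf \<inter> V2 = V2 - Vf" by auto
  have "\<forall>i\<in>I. Y i \<subseteq> V2 - Vf \<inter> V2 \<and> card (Y i) \<le> s" using assms(5) by (simp add: V2)
  from fractional_matching_with_deficiency[OF finite_E2 half2_fpm_extra_deletions[OF assms(1)]
      assms(2-4) this]
  show ?thesis unfolding alive2 V2 .
qed

lemma fpm_glued_spread:
  fixes g :: "'a set \<Rightarrow> real" and d :: "'a \<Rightarrow> real"
  assumes room: "card (Vf \<inter> V2) + card (Ef \<inter> E2) + 1 \<le> 2*n - 4"
    and D: "D \<subseteq> V1 - Vf" "finite D"
    and \<sigma>: "\<forall>w\<in>D. \<sigma> w \<in> V2 - Vf \<and> {w, \<sigma> w} \<in> (M1 \<union> M2) - Ef"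
    and d: "\<forall>w\<in>D. 0 \<le> d w \<and> d w \<le> 1" "sum d D \<le> 1"
    and g: "\<forall>e\<in>alive1. 0 \<le> g e \<and> g e \<le> 1"
      "\<forall>w\<in>V1 - Vf. (\<Sum>e\<in>{e \<in> alive1. w \<in> e}. g e) = 1 - (if w \<in> D then d w else 0)"
  shows "\<exists>f. fractional_perfect_matching (delete glued (Vf, Ef)) f"
proof -
  have "\<forall>w\<in>D. {\<sigma> w} \<subseteq> V2 - Vf \<and> card {\<sigma> w} \<le> 1" using \<sigma> by simp
  moreover have "\<forall>w\<in>D. 0 \<le> d w" using d(1) by simp
  ultimately obtain k where k:
    "\<forall>e\<in>alive2. 0 \<le> k e \<and> k e \<le> 1"
    "\<forall>v\<in>V2 - Vf. (\<Sum>e\<in>{e \<in> alive2. v \<in> e}. k e) = 1 - (\<Sum>w\<in>{w\<in>D. v \<in> {\<sigma> w}}. d w)"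
    using half2_deficiency[OF room D(2) _ d(2), of "\<lambda>w. {\<sigma> w}"] by blast
  have "{w\<in>D. v \<in> {\<sigma> w}} = {w\<in>D. \<sigma> w = v}" for v by auto
  with k(2) have "\<forall>v\<in>V2 - Vf. (\<Sum>e\<in>{e \<in> alive2. v \<in> e}. k e) = 1 - (\<Sum>w\<in>{w\<in>D. \<sigma> w = v}. d w)"
    by simp
  then show ?thesis by (rule fpm_glued_from_halves[OF D \<sigma> d(1) g k(1)])
qed

lemma fpm_glued_uniform:
  fixes g :: "'a set \<Rightarrow> real" and t :: real
  assumes D: "D \<subseteq> V1 - Vf" "finite D"
    and room: "card (Vf \<inter> V2) + card (Ef \<inter> E2) + card D \<le> 2*n - 4"
    and \<sigma>: "\<forall>w\<in>D. \<sigma> w \<in> V2 - Vf \<and> {w, \<sigma> w} \<in> (M1 \<union> M2) - Ef" "inj_on \<sigma> D"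
    and t: "0 \<le> t" "t \<le> 1"
    and g: "\<forall>e\<in>alive1. 0 \<le> g e \<and> g e \<le> 1"
      "\<forall>w\<in>V1 - Vf. (\<Sum>e\<in>{e \<in> alive1. w \<in> e}. g e) = 1 - (if w \<in> D then t else 0)"
  shows "\<exists>f. fractional_perfect_matching (delete glued (Vf, Ef)) f"
proof -
  have "\<sigma> ` D \<subseteq> V2 - Vf" "card (\<sigma> ` D) \<le> card D" using \<sigma>(1) card_image_le[OF D(2)] by auto
  with half2_deficiency[OF room, of "{()}" "\<lambda>_. t" "\<lambda>_. \<sigma> ` D"] t obtain k where k:
    "\<forall>e\<in>alive2. 0 \<le> k e \<and> k e \<le> 1"
    "\<forall>v\<in>V2 - Vf. (\<Sum>e\<in>{e \<in> alive2. v \<in> e}. k e) = 1 - (\<Sum>i\<in>{i\<in>{()}. v \<in> \<sigma> ` D}. t)"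
    by auto
  have "(\<Sum>i\<in>{i\<in>{()}. v \<in> \<sigma> ` D}. t) = (\<Sum>w\<in>{w\<in>D. \<sigma> w = v}. t)" for v
  proof (cases "v \<in> \<sigma> ` D")
    case True
    then obtain w0 where "w0 \<in> D" "v = \<sigma> w0" by blast
    then have "{w\<in>D. \<sigma> w = v} = {w0}" using \<sigma>(2) unfolding inj_on_def by auto
    with True show ?thesis by simp
  next
    case False
    then have empty: "{w\<in>D. \<sigma> w = v} = {}" by auto
    show ?thesis unfolding empty using False by simp
  qed
  with k have "\<forall>v\<in>V2 - Vf. (\<Sum>e\<in>{e \<in> alive2. v \<in> e}. k e) = 1 - (\<Sum>w\<in>{w\<in>D. \<sigma> w = v}. t)"
    by simp
  with fpm_glued_from_halves[OF D \<sigma>(1), of "\<lambda>_. t"] t g k(1) show ?thesis by simp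
qed

lemma fpm_glued_of_halves:
  assumes "\<exists>g. fractional_perfect_matching (delete (V1, E1) (Vf \<inter> V1, Ef \<inter> E1)) g"
    and "\<exists>k. fractional_perfect_matching (delete (V2, E2) (Vf \<inter> V2, Ef \<inter> E2)) k"
  shows "\<exists>f. fractional_perfect_matching (delete glued (Vf, Ef)) f"
proof -
  obtain g k where
    "fractional_perfect_matching (delete (V1, E1) (Vf \<inter> V1, Ef \<inter> E1)) g"
    "fractional_perfect_matching (delete (V2, E2) (Vf \<inter> V2, Ef \<inter> E2)) k"
    using assms by blast
  then have "\<forall>e\<in>alive1. 0 \<le> g e \<and> g e \<le> 1" "\<forall>w\<in>V1 - Vf. (\<Sum>e\<in>{e \<in> alive1. w \<in> e}. g e) = 1"
    "\<forall>e\<in>alive2. 0 \<le> k e \<and> k e \<le> 1" "\<forall>v\<in>V2 - Vf. (\<Sum>e\<in>{e \<in> alive2. v \<in> e}. k e) = 1"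
    unfolding fractional_perfect_matching_def edges_delete_half1[symmetric]
      edges_delete_half2[symmetric] by auto
  then show ?thesis using fpm_glued_from_halves[of "{}" id "\<lambda>_. 0" g k] by simp
qed

end

context faulty_glued
begin

lemma alive1_restore_vertex:
  assumes z: "z \<in> Vf \<inter> V1"
    and g: "fractional_perfect_matching (delete (V1, E1) (Vf \<inter> V1 - {z}, Ef \<inter> E1)) g"
  defines "D \<equiv> {w \<in> V1 - Vf. {z, w} \<in> E1 - Ef}"
  shows "\<forall>e\<in>alive1. 0 \<le> g e \<and> g e \<le> 1"
    and "\<forall>w\<in>V1 - Vf. (\<Sum>e\<in>{e \<in> alive1. w \<in> e}. g e) = 1 - (if w \<in> D then g {z, w} else 0)"
    and "(\<Sum>w\<in>D. g {z, w}) = 1" "\<forall>w\<in>D. 0 \<le> g {z, w} \<and> g {z, w} \<le> 1"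
proof -
  let ?EG = "edges (delete (V1, E1) (Vf \<inter> V1 - {z}, Ef \<inter> E1))"
  have EG: "?EG = {e \<in> E1 - Ef. e \<inter> (Vf - {z}) = {}}" using E1_subset by auto
  have sum_EG: "(\<Sum>e\<in>{e \<in> ?EG. w \<in> e}. g e) = 1" if "w \<in> V1 - (Vf - {z})" for w
    using g that unfolding fractional_perfect_matching_def by auto
  have "alive1 \<subseteq> ?EG" unfolding EG alive1_def by auto
  then show "\<forall>e\<in>alive1. 0 \<le> g e \<and> g e \<le> 1"
    using g unfolding fractional_perfect_matching_def by blast
  have star_z: "{e \<in> ?EG. z \<in> e} = (\<lambda>w. {z, w}) ` D"
  proof
    show "{e \<in> ?EG. z \<in> e} \<subseteq> (\<lambda>w. {z, w}) ` D"
    proof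
      fix e assume e: "e \<in> {e \<in> ?EG. z \<in> e}"
      then have "e \<in> E1" by simp
      then obtain a b where ab: "a \<noteq> b" "a \<in> V1" "b \<in> V1" "e = {a, b}"
        using simple_edgesE[OF simple_E1] by blast
      define w where "w = (if a = z then b else a)"
      have w: "e = {z, w}" "w \<noteq> z" "w \<in> V1" using ab e unfolding w_def by (auto simp: insert_commute)
      then have "w \<in> D" using e unfolding D_def EG by auto
      with w show "e \<in> (\<lambda>w. {z, w}) ` D" by blast
    qed
    show "(\<lambda>w. {z, w}) ` D \<subseteq> {e \<in> ?EG. z \<in> e}"
      using z unfolding D_def by auto
  qed
  show "\<forall>w\<in>D. 0 \<le> g {z, w} \<and> g {z, w} \<le> 1"
    using g z unfolding fractional_perfect_matching_def D_def by auto
  have "inj_on (\<lambda>w. {z, w}) D" unfolding inj_on_def by (simp add: doubleton_eq_iff)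
  then show "(\<Sum>w\<in>D. g {z, w}) = 1"
    using sum_EG[of z] z unfolding star_z by (simp add: sum.reindex)
  show "\<forall>w\<in>V1 - Vf. (\<Sum>e\<in>{e \<in> alive1. w \<in> e}. g e) = 1 - (if w \<in> D then g {z, w} else 0)"
  proof
    fix w assume w: "w \<in> V1 - Vf"
    then have "w \<noteq> z" using z by blast
    have "e = {z, w}" if "e \<in> ?EG" "w \<in> e" "z \<in> e" for e
      using E1_eq[of e z w] that \<open>w \<noteq> z\<close> by auto
    then have through_z: "{e \<in> ?EG. w \<in> e \<and> z \<in> e} = (if w \<in> D then {{z, w}} else {})"
      using w z unfolding D_def by auto
    have "{e \<in> ?EG. w \<in> e} = {e \<in> alive1. w \<in> e} \<union> {e \<in> ?EG. w \<in> e \<and> z \<in> e}"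
      using E1_subset z unfolding EG alive1_def by blast
    moreover have "{e \<in> alive1. w \<in> e} \<inter> {e \<in> ?EG. w \<in> e \<and> z \<in> e} = {}"
      using z unfolding alive1_def by auto
    ultimately have "(\<Sum>e\<in>{e \<in> alive1. w \<in> e}. g e) + (\<Sum>e\<in>{e \<in> ?EG. w \<in> e \<and> z \<in> e}. g e) = 1"
      using sum_EG[of w] w finite_alive1 through_z by (simp add: sum.union_disjoint)
    then show "(\<Sum>e\<in>{e \<in> alive1. w \<in> e}. g e) = 1 - (if w \<in> D then g {z, w} else 0)"
      unfolding through_z by (cases "w \<in> D") simp_all
  qed
qed

lemma alive1_restore_edge:
  assumes r: "r \<in> Ef \<inter> E1" "r \<inter> Vf = {}"
    and g: "fractional_perfect_matching (delete (V1, E1) (Vf \<inter> V1, Ef \<inter> E1 - {r})) g"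
  shows "\<forall>e\<in>alive1. 0 \<le> g e \<and> g e \<le> 1" "0 \<le> g r" "g r \<le> 1"
    and "\<forall>w\<in>V1 - Vf. (\<Sum>e\<in>{e \<in> alive1. w \<in> e}. g e) = 1 - (if w \<in> r then g r else 0)"
proof -
  let ?EG = "edges (delete (V1, E1) (Vf \<inter> V1, Ef \<inter> E1 - {r}))"
  have EG: "?EG = insert r alive1" using r E1_subset unfolding alive1_def by auto
  have "r \<notin> alive1" using r unfolding alive1_def by blast
  show "\<forall>e\<in>alive1. 0 \<le> g e \<and> g e \<le> 1" "0 \<le> g r" "g r \<le> 1"
    using g unfolding fractional_perfect_matching_def EG by auto
  show "\<forall>w\<in>V1 - Vf. (\<Sum>e\<in>{e \<in> alive1. w \<in> e}. g e) = 1 - (if w \<in> r then g r else 0)"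
  proof
    fix w assume "w \<in> V1 - Vf"
    then have "(\<Sum>e\<in>{e \<in> ?EG. w \<in> e}. g e) = 1"
      using g unfolding fractional_perfect_matching_def by auto
    moreover have "{e \<in> ?EG. w \<in> e} =
        (if w \<in> r then insert r {e \<in> alive1. w \<in> e} else {e \<in> alive1. w \<in> e})"
      unfolding EG by auto
    ultimately show "(\<Sum>e\<in>{e \<in> alive1. w \<in> e}. g e) = 1 - (if w \<in> r then g r else 0)"
      using finite_alive1 \<open>r \<notin> alive1\<close> by (cases "w \<in> r") simp_all
  qed
qed

end

subsection \<open>Exactly \<open>2n - 3\<close> faults in the first half\<close>

context gaq_step
begin

lemma live_cross_edge_of_isolated:
  assumes x: "x \<in> V1 - Vf" "\<forall>e\<in>alive1. x \<notin> e"
    and no_isolated: "\<not> has_isolated_vertex (delete glued (Vf, Ef))"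
  obtains v where "v \<in> V2 - Vf" "{x, v} \<in> (M1 \<union> M2) - Ef"
proof -
  have "x \<in> verts (delete glued (Vf, Ef))" using x by simp
  then obtain e where e: "e \<in> edges (delete glued (Vf, Ef))" "x \<in> e"
    using no_isolated unfolding has_isolated_vertex_def by blast
  then have "e \<notin> E1" using x unfolding alive1_def by auto
  moreover have "e \<notin> E2" using E2_subset e(2) x disjoint by blast
  ultimately have "e \<in> M1 \<union> M2" using e(1) by auto
  then obtain u v where uv: "u \<in> V1" "v \<in> V2" "e = {u, v}" by (rule cross_edgeE)
  then have "x = u" using e(2) x disjoint by auto
  with e uv \<open>e \<in> M1 \<union> M2\<close> show ?thesis by (intro that[of v]) auto
qed

lemma isolated_in_half1_star_faulty:
  assumes x: "x \<in> V1 - Vf" "\<forall>e\<in>alive1. x \<notin> e"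
    and no_live_edge_to_Vf: "\<not> (\<exists>z. z \<in> Vf \<inter> V1 \<and> {x, z} \<in> E1 - Ef)"
  shows "{e \<in> E1. x \<in> e} \<subseteq> Ef \<inter> E1"
proof
  fix e assume e: "e \<in> {e \<in> E1. x \<in> e}"
  show "e \<in> Ef \<inter> E1"
  proof (rule ccontr)
    assume "e \<notin> Ef \<inter> E1"
    moreover have "e \<notin> alive1" using x e by blast
    ultimately obtain y where "y \<in> e" "y \<in> Vf" using e unfolding alive1_def by blast
    moreover have "e = {x, y}" using E1_eq e \<open>y \<in> e\<close> \<open>y \<in> Vf\<close> x by blast
    ultimately show False using no_live_edge_to_Vf E1_subset e \<open>e \<notin> Ef \<inter> E1\<close> by blast
  qed
qed

lemma fpm_glued_single_deficiency:
  fixes g :: "'a set \<Rightarrow> real"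
  assumes room: "card (Vf \<inter> V2) + card (Ef \<inter> E2) \<le> 2"
    and x: "x \<in> V1 - Vf" and v: "v \<in> V2 - Vf" "{x, v} \<in> (M1 \<union> M2) - Ef"
    and g: "\<forall>e\<in>alive1. 0 \<le> g e \<and> g e \<le> 1"
      "\<forall>w\<in>V1 - Vf. (\<Sum>e\<in>{e \<in> alive1. w \<in> e}. g e) = 1 - (if w \<in> {x} then 1 else 0)"
  shows "\<exists>f. fractional_perfect_matching (delete glued (Vf, Ef)) f"
proof (rule fpm_glued_uniform[of "{x}" "\<lambda>_. v" 1])
  show "card (Vf \<inter> V2) + card (Ef \<inter> E2) + card {x} \<le> 2*n - 4" using room n_ge_5 by simp
qed (use x v g in simp_all)

context
  fixes x :: 'a
  assumes faults1: "card (Vf \<inter> V1) + card (Ef \<inter> E1) = 2*n - 3"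
    and x: "x \<in> V1 - Vf" "\<forall>e\<in>alive1. x \<notin> e"
begin

lemma alive1_missing_isolated_via_vertex:
  assumes z: "z \<in> Vf \<inter> V1" "{x, z} \<in> E1 - Ef"
  obtains g :: "'a set \<Rightarrow> real" where "\<forall>e\<in>alive1. 0 \<le> g e \<and> g e \<le> 1"
    "\<forall>w\<in>V1 - Vf. (\<Sum>e\<in>{e \<in> alive1. w \<in> e}. g e) = 1 - (if w \<in> {x} then 1 else 0)"
proof -
  have "card (Vf \<inter> V1 - {z}) = card (Vf \<inter> V1) - 1" "card (Vf \<inter> V1) > 0"
    using z finite_fault_parts(1) by (auto simp: card_gt_0_iff)
  then have "card (Vf \<inter> V1 - {z}) + card (Ef \<inter> E1) < 2*n - 3" using faults1 by linarith
  then obtain g where g: "fractional_perfect_matching (delete (V1, E1) (Vf \<inter> V1 - {z}, Ef \<inter> E1)) g"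
    using half1_fpm[of "Vf \<inter> V1 - {z}" "Ef \<inter> E1"] by auto
  define D where "D = {w \<in> V1 - Vf. {z, w} \<in> E1 - Ef}"
  note restore = alive1_restore_vertex[OF z(1) g, folded D_def]
  have "x \<in> D" using x z unfolding D_def by (simp add: insert_commute)
  have "(\<Sum>e\<in>{e \<in> alive1. x \<in> e}. g e) = 1 - g {z, x}"
    using restore(2) x(1) \<open>x \<in> D\<close> by simp
  moreover have "{e \<in> alive1. x \<in> e} = {}" using x(2) by blast
  ultimately have gzx: "g {z, x} = 1" by simp
  have "finite D" using finite_V1 unfolding D_def by simp
  then have "(\<Sum>w\<in>D - {x}. g {z, w}) = 0"
    using restore(3) gzx \<open>x \<in> D\<close> by (simp add: sum.remove)
  then have "g {z, w} = 0" if "w \<in> D - {x}" for w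
    using sum_nonneg_eq_0_iff[of "D - {x}" "\<lambda>w. g {z, w}"] restore(4) \<open>finite D\<close> that by auto
  then have "\<forall>w\<in>V1 - Vf. (\<Sum>e\<in>{e \<in> alive1. w \<in> e}. g e) = 1 - (if w \<in> {x} then 1 else 0)"
    using restore(2) gzx \<open>x \<in> D\<close> by (auto split: if_splits)
  with restore(1) show ?thesis by (rule that)
qed

lemma alive1_missing_isolated_via_star:
  assumes star_faulty: "{e \<in> E1. x \<in> e} \<subseteq> Ef \<inter> E1"
  obtains g :: "'a set \<Rightarrow> real" where "\<forall>e\<in>alive1. 0 \<le> g e \<and> g e \<le> 1"
    "\<forall>w\<in>V1 - Vf. (\<Sum>e\<in>{e \<in> alive1. w \<in> e}. g e) = 1 - (if w \<in> {x} then 1 else 0)"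
proof -
  let ?A = "insert x (Vf \<inter> V1)" and ?B = "Ef \<inter> E1 - {e \<in> E1. x \<in> e}"
  have "card ?A = card (Vf \<inter> V1) + 1" using x finite_fault_parts(1) by simp
  moreover have "card ?B = card (Ef \<inter> E1) - (2*n - 3)"
    using card_Diff_subset[OF finite_subset[OF star_faulty finite_fault_parts(3)] star_faulty]
      card_star_half1 x by simp
  moreover have "card (Ef \<inter> E1) \<ge> 2*n - 3"
    using card_mono[OF finite_fault_parts(3) star_faulty] card_star_half1 x by simp
  ultimately have "card ?A + card ?B < 2*n - 3" using faults1 n_ge_5 by linarith
  then obtain g where g: "fractional_perfect_matching (delete (V1, E1) (?A, ?B)) g"
    using half1_fpm[of ?A ?B] x by auto
  have EG: "edges (delete (V1, E1) (?A, ?B)) = alive1"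
    using E1_subset x unfolding alive1_def by auto
  have empty: "{e \<in> alive1. x \<in> e} = {}" using x(2) by blast
  have "\<forall>e\<in>alive1. 0 \<le> g e \<and> g e \<le> 1"
    using g EG unfolding fractional_perfect_matching_def by blast
  moreover have "\<forall>w\<in>V1 - Vf. (\<Sum>e\<in>{e \<in> alive1. w \<in> e}. g e) = 1 - (if w \<in> {x} then 1 else 0)"
    using g unfolding fractional_perfect_matching_def EG by (auto simp add: empty)
  ultimately show ?thesis by (rule that)
qed

text \<open>If \<open>x\<close> is isolated in the damaged first half, it suffices to find a fractional matching of
  the damaged first half that covers everything except \<open>x\<close>: the vertex \<open>x\<close> is then matched along
  a surviving cross edge, which exists because the glued graph has no isolated vertex.\<close>

lemma fpm_glued_isolated_in_half1:
  assumes faults2: "card (Vf \<inter> V2) + card (Ef \<inter> E2) \<le> 2"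
    and no_isolated: "\<not> has_isolated_vertex (delete glued (Vf, Ef))"
  shows "\<exists>f. fractional_perfect_matching (delete glued (Vf, Ef)) f"
proof -
  obtain v where v: "v \<in> V2 - Vf" "{x, v} \<in> (M1 \<union> M2) - Ef"
    using live_cross_edge_of_isolated[OF x no_isolated] .
  obtain g :: "'a set \<Rightarrow> real" where "\<forall>e\<in>alive1. 0 \<le> g e \<and> g e \<le> 1"
    "\<forall>w\<in>V1 - Vf. (\<Sum>e\<in>{e \<in> alive1. w \<in> e}. g e) = 1 - (if w \<in> {x} then 1 else 0)"
  proof (cases "\<exists>z. z \<in> Vf \<inter> V1 \<and> {x, z} \<in> E1 - Ef")
    case True
    then show ?thesis using alive1_missing_isolated_via_vertex that by blast
  next
    case False
    then show ?thesis using alive1_missing_isolated_via_star isolated_in_half1_star_faulty[OF x] that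
      by blast
  qed
  then show ?thesis by (rule fpm_glued_single_deficiency[OF faults2 x(1) v])
qed

end

end

subsection \<open>Exactly \<open>2n - 2\<close> faults in the first half\<close>

lemma card_ge_2I: "finite S \<Longrightarrow> a \<in> S \<Longrightarrow> b \<in> S \<Longrightarrow> a \<noteq> b \<Longrightarrow> card S \<ge> 2"
  using card_mono[of S "{a, b}"] by simp

lemma card_ge_2E:
  assumes "card S \<ge> 2"
  obtains a b where "a \<in> S" "b \<in> S" "a \<noteq> b"
proof -
  obtain T where "T \<subseteq> S" "card T = 2" using obtain_subset_with_card_n[OF assms] by metis
  then show ?thesis using that by (auto simp: card_2_iff)
qed

context gaq_step
begin

definition cross_blocked :: "'a \<Rightarrow> bool" where
  "cross_blocked w \<longleftrightarrow> (\<exists>v. {w, v} \<in> M1 \<union> M2 \<and> ({w, v} \<in> Ef \<or> v \<in> Vf))"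

lemma finite_faulty_star: "finite {e \<in> Ef \<inter> E1. x \<in> e}"
  by (rule finite_subset[OF _ finite_E1]) blast

lemma card_neighbours_le_blocking_faults:
  assumes "\<forall>w\<in>neighbours (V1, E1) x. w \<in> Vf \<or> {x, w} \<in> Ef"
  shows "card (neighbours (V1, E1) x) \<le>
    card (neighbours (V1, E1) x \<inter> Vf) + card {e \<in> Ef \<inter> E1. x \<in> e}"
proof -
  let ?N = "neighbours (V1, E1) x"
  let ?Q = "{w. {x, w} \<in> Ef \<inter> E1}"
  have "?N \<subseteq> (?N \<inter> Vf) \<union> ?Q" using assms unfolding neighbours_def by auto
  moreover have "finite ?Q"
    by (rule finite_subset[OF _ finite_neighbours_half[of x]]) (auto simp: neighbours_def)
  ultimately have "card ?N \<le> card ((?N \<inter> Vf) \<union> ?Q)"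
    using finite_neighbours_half by (intro card_mono) auto
  also have "\<dots> \<le> card (?N \<inter> Vf) + card ?Q" by (rule card_Un_le)
  also have "card ?Q \<le> card {e \<in> Ef \<inter> E1. x \<in> e}"
  proof (rule card_inj_on_le)
    show "inj_on (\<lambda>w. {x, w}) ?Q" unfolding inj_on_def by (simp add: doubleton_eq_iff)
    show "finite {e \<in> Ef \<inter> E1. x \<in> e}" by (rule finite_faulty_star)
  qed auto
  finally show ?thesis by simp
qed

lemma isolated_in_half1_blocking:
  assumes "x \<in> V1 - Vf" "\<forall>e\<in>alive1. x \<notin> e"
  shows "\<forall>w\<in>neighbours (V1, E1) x. w \<in> Vf \<or> {x, w} \<in> Ef"
  using assms unfolding neighbours_def alive1_def by auto

text \<open>Two vertices whose neighbourhoods in the first half are blocked would each need \<open>2n - 3\<close>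
  faults around them, and they share at most \<open>2n - 6\<close> faulty neighbours and one faulty edge.\<close>

lemma blocked_neighbourhood_unique:
  assumes faults1: "card (Vf \<inter> V1) + card (Ef \<inter> E1) \<le> 2*n - 2"
    and x: "x \<in> V1" "\<forall>w\<in>neighbours (V1, E1) x. w \<in> Vf \<or> {x, w} \<in> Ef"
    and y: "y \<in> V1" "\<forall>w\<in>neighbours (V1, E1) y. w \<in> Vf \<or> {y, w} \<in> Ef"
  shows "x = y"
proof (rule ccontr)
  assume "x \<noteq> y"
  let ?Px = "neighbours (V1, E1) x \<inter> Vf" and ?Py = "neighbours (V1, E1) y \<inter> Vf"
  let ?Sx = "{e \<in> Ef \<inter> E1. x \<in> e}" and ?Sy = "{e \<in> Ef \<inter> E1. y \<in> e}"
  have kx: "2*n - 3 \<le> card ?Px + card ?Sx"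
    using card_neighbours_le_blocking_faults[OF x(2)] card_neighbours_half1 x by simp
  have ky: "2*n - 3 \<le> card ?Py + card ?Sy"
    using card_neighbours_le_blocking_faults[OF y(2)] card_neighbours_half1 y by simp
  have fin: "finite ?Px" "finite ?Py" "finite ?Sx" "finite ?Sy"
    using finite_neighbours_half finite_faulty_star by simp_all
  have "card (?Px \<union> ?Py) \<le> card (Vf \<inter> V1)"
    using neighbours_half_subset by (intro card_mono finite_fault_parts(1)) blast
  moreover have "card (?Sx \<union> ?Sy) \<le> card (Ef \<inter> E1)"
    by (intro card_mono finite_fault_parts(3)) blast
  moreover have "card (?Px \<inter> ?Py) \<le> 2*n - 6"
  proof -
    have "card (?Px \<inter> ?Py) \<le> card (neighbours (V1, E1) x \<inter> neighbours (V1, E1) y)"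
      using finite_neighbours_half by (intro card_mono) auto
    then show ?thesis using common_neighbours_half1[of x y] x y \<open>x \<noteq> y\<close> by simp
  qed
  moreover have "card (?Sx \<inter> ?Sy) \<le> 1"
  proof -
    have "?Sx \<inter> ?Sy \<subseteq> {{x, y}}" using E1_eq \<open>x \<noteq> y\<close> by blast
    then show ?thesis using card_mono[of "{{x, y}}" "?Sx \<inter> ?Sy"] by simp
  qed
  ultimately show False
    using kx ky card_Un_Int[OF fin(1,2)] card_Un_Int[OF fin(3,4)] faults1 n_ge_5 by linarith
qed

lemma no_isolated_half1I:
  assumes AB: "A \<subseteq> Vf" "B \<subseteq> Ef"
    and covered: "\<And>v. v \<in> V1 - Vf \<Longrightarrow> v \<notin> X \<Longrightarrow> \<exists>e\<in>alive1. v \<in> e"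
    and extra: "\<And>v. v \<in> V1 - A \<Longrightarrow> v \<in> X \<or> v \<in> Vf \<Longrightarrow> \<exists>e\<in>E1 - B. v \<in> e \<and> e \<inter> A = {}"
  shows "\<not> has_isolated_vertex (delete (V1, E1) (A, B))"
proof (rule no_isolated_vertexI)
  fix v assume v: "v \<in> verts (delete (V1, E1) (A, B))"
  then have v: "v \<in> V1 - A" by simp
  show "\<exists>e\<in>edges (delete (V1, E1) (A, B)). v \<in> e"
  proof (cases "v \<in> X \<or> v \<in> Vf")
    case True
    then obtain e where "e \<in> E1 - B" "v \<in> e" "e \<inter> A = {}" using extra[OF v] by blast
    then show ?thesis by auto
  next
    case False
    then obtain e where "e \<in> alive1" "v \<in> e" using covered v by blast
    moreover have "alive1 \<subseteq> edges (delete (V1, E1) (A, B))" using AB unfolding alive1_def by auto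
    ultimately show ?thesis by blast
  qed
qed

context
  assumes cross_faults: "card (Vf \<inter> V2) + card (Ef \<inter> (M1 \<union> M2)) \<le> 1"
begin

lemma live_cross_edge:
  assumes w: "w \<in> V1"
  obtains s where "s \<in> V2 - Vf" "{w, s} \<in> (M1 \<union> M2) - Ef"
proof -
  obtain v1 v2 where p: "v1 \<in> V2" "v2 \<in> V2" "v1 \<noteq> v2" "{w, v1} \<in> M1" "{w, v2} \<in> M2"
    using cross_partners[OF w] by metis
  have "{w, v1} \<noteq> {w, v2}" using p(3) by (auto simp: doubleton_eq_iff)
  have blocked_count: "card (Vf \<inter> V2) + card (Ef \<inter> (M1 \<union> M2)) \<ge> 2"
    if "{w, v1} \<in> Ef \<or> v1 \<in> Vf" "{w, v2} \<in> Ef \<or> v2 \<in> Vf"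
  proof -
    have "card (Vf \<inter> V2) \<ge> 1" if "v \<in> Vf" "v \<in> V2" for v
      using that finite_fault_parts(2) by (metis One_nat_def Suc_leI card_gt_0_iff empty_iff IntI)
    moreover have "card (Ef \<inter> (M1 \<union> M2)) \<ge> 1" if "e \<in> Ef" "e \<in> M1 \<union> M2" for e
      using that finite_fault_parts(5) by (metis One_nat_def Suc_leI card_gt_0_iff empty_iff IntI)
    moreover have "card (Vf \<inter> V2) \<ge> 2" if "v1 \<in> Vf" "v2 \<in> Vf"
      using that p card_ge_2I[OF finite_fault_parts(2)] by blast
    moreover have "card (Ef \<inter> (M1 \<union> M2)) \<ge> 2" if "{w, v1} \<in> Ef" "{w, v2} \<in> Ef"
      using that p \<open>{w, v1} \<noteq> {w, v2}\<close> card_ge_2I[OF finite_fault_parts(5)] by blast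
    ultimately show ?thesis using that p by fastforce
  qed
  show ?thesis
  proof (cases "{w, v1} \<in> Ef \<or> v1 \<in> Vf")
    case True
    then have "{w, v2} \<notin> Ef" "v2 \<notin> Vf" using blocked_count cross_faults by fastforce+
    then show ?thesis using p by (intro that[of v2]) auto
  next
    case False
    then show ?thesis using p by (intro that[of v1]) auto
  qed
qed

lemma distinct_live_cross_edges:
  assumes w: "w \<in> V1" "w' \<in> V1" and "\<not> cross_blocked w"
  obtains s s' where "s \<noteq> s'" "s \<in> V2 - Vf" "{w, s} \<in> (M1 \<union> M2) - Ef"
    "s' \<in> V2 - Vf" "{w', s'} \<in> (M1 \<union> M2) - Ef"
proof -
  obtain s' where s': "s' \<in> V2 - Vf" "{w', s'} \<in> (M1 \<union> M2) - Ef"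
    using live_cross_edge[OF w(2)] .
  obtain v1 v2 where p: "v1 \<in> V2" "v2 \<in> V2" "v1 \<noteq> v2" "{w, v1} \<in> M1" "{w, v2} \<in> M2"
    using cross_partners[OF w(1)] by metis
  with \<open>\<not> cross_blocked w\<close> have "v1 \<in> V2 - Vf" "{w, v1} \<in> (M1 \<union> M2) - Ef"
    "v2 \<in> V2 - Vf" "{w, v2} \<in> (M1 \<union> M2) - Ef"
    unfolding cross_blocked_def by blast+
  with s' p(3) show ?thesis by (metis that)
qed

text \<open>At most one faulty cross edge or faulty vertex of the second half meets the cross edges, so at
  most two vertices of the first half are cross-blocked.\<close>

lemma card_cross_blocked: "card {w \<in> V1. cross_blocked w} \<le> 2"
proof (cases "Vf \<inter> V2 = {}")
  case True
  show ?thesis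
  proof (cases "Ef \<inter> (M1 \<union> M2) = {}")
    case True
    with \<open>Vf \<inter> V2 = {}\<close> have none: "{w \<in> V1. cross_blocked w} = {}"
      unfolding cross_blocked_def using cross_partner by blast
    show ?thesis unfolding none by simp
  next
    case False
    then have "card (Ef \<inter> (M1 \<union> M2)) \<noteq> 0" using finite_fault_parts(5) by simp
    with cross_faults have "card (Ef \<inter> (M1 \<union> M2)) = 1" by simp
    then obtain \<phi> where \<phi>: "Ef \<inter> (M1 \<union> M2) = {\<phi>}" by (rule card_1_singletonE)
    then have "\<phi> \<in> M1 \<union> M2" by blast
    then obtain a b where ab: "a \<in> V1" "b \<in> V2" "\<phi> = {a, b}" by (rule cross_edgeE)
    have "{w \<in> V1. cross_blocked w} \<subseteq> {a}"
    proof
      fix w assume "w \<in> {w \<in> V1. cross_blocked w}"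
      then obtain v where v: "w \<in> V1" "{w, v} \<in> M1 \<union> M2" "{w, v} \<in> Ef \<or> v \<in> Vf"
        unfolding cross_blocked_def by blast
      then have "{w, v} \<in> Ef \<inter> (M1 \<union> M2)" using cross_partner \<open>Vf \<inter> V2 = {}\<close> by blast
      then have "{w, v} = {a, b}" using \<phi> ab by simp
      then show "w \<in> {a}" using v(1) ab(2) disjoint by (auto simp: doubleton_eq_iff)
    qed
    then have "card {w \<in> V1. cross_blocked w} \<le> card {a}" by (rule card_mono[rotated]) simp
    then show ?thesis by simp
  qed
next
  case False
  then obtain y where y: "y \<in> Vf \<inter> V2" by blast
  then have "card (Vf \<inter> V2) \<noteq> 0" using finite_fault_parts(2) by auto
  then have "card (Vf \<inter> V2) = 1" "card (Ef \<inter> (M1 \<union> M2)) = 0" using cross_faults by simp_all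
  then have V2y: "Vf \<inter> V2 = {y}" and no_M: "Ef \<inter> (M1 \<union> M2) = {}"
    using y finite_fault_parts(2,5) by (metis card_1_singletonE singletonD, simp)
  interpret other: glued_pair V2 E2 V1 E1 M1 M2 by (rule swap)
  obtain a b where ab: "\<And>w. {y, w} \<in> M1 \<union> M2 \<Longrightarrow> w = a \<or> w = b"
    using other.cross_partners[of y] y by blast
  have "{w \<in> V1. cross_blocked w} \<subseteq> {a, b}"
  proof
    fix w assume "w \<in> {w \<in> V1. cross_blocked w}"
    then obtain v where v: "w \<in> V1" "{w, v} \<in> M1 \<union> M2" "{w, v} \<in> Ef \<or> v \<in> Vf"
      unfolding cross_blocked_def by blast
    then have "v \<in> V2" using cross_partner by blast
    then have "v = y" using v no_M V2y by blast
    then have "{y, w} \<in> M1 \<union> M2" using v(2) by (simp add: insert_commute)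
    then show "w \<in> {a, b}" using ab by blast
  qed
  then have "card {w \<in> V1. cross_blocked w} \<le> card {a, b}" by (rule card_mono[rotated]) simp
  also have "\<dots> \<le> 2" by (simp add: card_insert_le_m1)
  finally show ?thesis .
qed

lemma edge_pair_unblocked_end:
  assumes "r1 \<in> E1" "r2 \<in> E1" "r1 \<noteq> r2"
  shows "\<exists>r\<in>{r1, r2}. \<exists>u\<in>r. \<not> cross_blocked u"
proof (rule ccontr)
  assume "\<not> ?thesis"
  then have sub: "r1 \<union> r2 \<subseteq> {w \<in> V1. cross_blocked w}" using E1_subset assms by blast
  obtain a b where ab: "a \<noteq> b" "r1 = {a, b}" using simple_edgesE[OF simple_E1 assms(1)] by metis
  obtain c d where cd: "c \<noteq> d" "r2 = {c, d}" using simple_edgesE[OF simple_E1 assms(2)] by metis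
  obtain y where y: "y \<in> r2" "y \<notin> r1" using ab cd assms(3) by auto
  have "3 = card (insert y r1)" using y ab by simp
  also have "\<dots> \<le> card (r1 \<union> r2)" using y ab cd by (intro card_mono) auto
  also have "\<dots> \<le> card {w \<in> V1. cross_blocked w}" using card_mono[OF _ sub] finite_V1 by simp
  finally show False using card_cross_blocked by simp
qed

context
  assumes faults1: "card (Vf \<inter> V1) + card (Ef \<inter> E1) = 2*n - 2"
    and faults2: "card (Vf \<inter> V2) + card (Ef \<inter> E2) \<le> 1"
begin

text \<open>Putting one faulty edge \<open>r\<close> back into the first half leaves \<open>2n - 3\<close> faults there; the weight of
  \<open>r\<close> is then rerouted to the second half along two distinct live cross edges at its ends.\<close>

lemma fpm_glued_restore_edge:
  assumes r: "r \<in> Ef \<inter> E1" "r \<inter> Vf = {}" and u: "u \<in> r" "\<not> cross_blocked u"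
    and no_isolated: "\<not> has_isolated_vertex (delete (V1, E1) (Vf \<inter> V1, Ef \<inter> E1 - {r}))"
  shows "\<exists>f. fractional_perfect_matching (delete glued (Vf, Ef)) f"
proof -
  obtain a b where ab: "a \<noteq> b" "r = {a, b}" using simple_edgesE[OF simple_E1, of r] r(1) by blast
  define u' where "u' = (if u = a then b else a)"
  have u': "u' \<noteq> u" "r = {u, u'}" using ab u(1) unfolding u'_def by (auto simp: insert_commute)
  have uV: "u \<in> V1 - Vf" "u' \<in> V1 - Vf" using E1_subset r u' by auto
  have "card (Ef \<inter> E1 - {r}) = card (Ef \<inter> E1) - 1" "card (Ef \<inter> E1) > 0"
    using r finite_fault_parts(3) by (auto simp: card_gt_0_iff)
  then have "card (Vf \<inter> V1) + card (Ef \<inter> E1 - {r}) \<le> 2*n - 3" using faults1 by linarith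
  then obtain g where g: "fractional_perfect_matching (delete (V1, E1) (Vf \<inter> V1, Ef \<inter> E1 - {r})) g"
    using half1_fpm_no_isolated[OF _ _ _ no_isolated] by blast
  note restore = alive1_restore_edge[OF r g]
  obtain s s' where ss: "s \<noteq> s'" "s \<in> V2 - Vf" "{u, s} \<in> (M1 \<union> M2) - Ef"
    "s' \<in> V2 - Vf" "{u', s'} \<in> (M1 \<union> M2) - Ef"
    using distinct_live_cross_edges[of u u'] uV u(2) by auto
  define \<sigma> where "\<sigma> y = (if y = u then s else s')" for y
  show ?thesis
  proof (rule fpm_glued_uniform[of "{u, u'}" \<sigma> "g r"])
    show "card (Vf \<inter> V2) + card (Ef \<inter> E2) + card {u, u'} \<le> 2*n - 4"
      using faults2 n_ge_5 u' by simp
    show "\<forall>w\<in>{u, u'}. \<sigma> w \<in> V2 - Vf \<and> {w, \<sigma> w} \<in> (M1 \<union> M2) - Ef" "inj_on \<sigma> {u, u'}"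
      using ss u' unfolding \<sigma>_def by auto
    show "\<forall>w\<in>V1 - Vf. (\<Sum>e\<in>{e \<in> alive1. w \<in> e}. g e) = 1 - (if w \<in> {u, u'} then g r else 0)"
      using restore(4) u' by simp
    show "{u, u'} \<subseteq> V1 - Vf" "finite {u, u'}" using uV by auto
  qed (fact restore(1-3))+
qed

text \<open>Putting one faulty vertex \<open>z\<close> back into the first half: the weight on each edge \<open>{z, w}\<close> is
  rerouted along a live cross edge at \<open>w\<close>.\<close>

lemma fpm_glued_restore_vertex:
  assumes z: "z \<in> Vf \<inter> V1"
    and no_isolated: "\<not> has_isolated_vertex (delete (V1, E1) (Vf \<inter> V1 - {z}, Ef \<inter> E1))"
  shows "\<exists>f. fractional_perfect_matching (delete glued (Vf, Ef)) f"
proof -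
  have "card (Vf \<inter> V1 - {z}) = card (Vf \<inter> V1) - 1" "card (Vf \<inter> V1) > 0"
    using z finite_fault_parts(1) by (auto simp: card_gt_0_iff)
  then have "card (Vf \<inter> V1 - {z}) + card (Ef \<inter> E1) \<le> 2*n - 3" using faults1 by linarith
  then obtain g where g: "fractional_perfect_matching (delete (V1, E1) (Vf \<inter> V1 - {z}, Ef \<inter> E1)) g"
    using half1_fpm_no_isolated[OF _ _ _ no_isolated] by blast
  define D where "D = {w \<in> V1 - Vf. {z, w} \<in> E1 - Ef}"
  note restore = alive1_restore_vertex[OF z g, folded D_def]
  define \<sigma> where "\<sigma> w = (SOME s. s \<in> V2 - Vf \<and> {w, s} \<in> (M1 \<union> M2) - Ef)" for w
  have "\<sigma> w \<in> V2 - Vf \<and> {w, \<sigma> w} \<in> (M1 \<union> M2) - Ef" if "w \<in> D" for w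
  proof -
    have "w \<in> V1" using that unfolding D_def by blast
    then obtain s where "s \<in> V2 - Vf" "{w, s} \<in> (M1 \<union> M2) - Ef" by (rule live_cross_edge)
    then show ?thesis unfolding \<sigma>_def by (metis (mono_tags, lifting) someI)
  qed
  then have "\<forall>w\<in>D. \<sigma> w \<in> V2 - Vf \<and> {w, \<sigma> w} \<in> (M1 \<union> M2) - Ef" by blast
  moreover have "D \<subseteq> V1 - Vf" "finite D" using finite_V1 unfolding D_def by auto
  moreover have "card (Vf \<inter> V2) + card (Ef \<inter> E2) + 1 \<le> 2*n - 4" using faults2 n_ge_5 by simp
  ultimately show ?thesis
    using restore by (intro fpm_glued_spread[of D \<sigma> "\<lambda>w. g {z, w}" g]) simp_all
qed

lemma unblocked_end_near:
  assumes x: "x \<in> V1" and S: "S \<subseteq> V1" "finite S" "card S \<ge> 2" "x \<notin> S"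
  obtains z u where "z \<in> S" "u \<in> {x, z}" "\<not> cross_blocked u"
proof (cases "cross_blocked x")
  case False
  obtain z where "z \<in> S" using S(3) card_ge_2E by metis
  with False show ?thesis using that by blast
next
  case True
  let ?B = "{w \<in> V1. cross_blocked w}"
  have "finite ?B" using finite_V1 by simp
  have "S \<inter> ?B \<subseteq> ?B - {x}" using S(4) by blast
  then have "card (S \<inter> ?B) \<le> card ?B - 1"
    using card_mono[OF _ \<open>S \<inter> ?B \<subseteq> ?B - {x}\<close>] \<open>finite ?B\<close> True x by simp
  then have "card (S \<inter> ?B) < card S" using card_cross_blocked S(3) by linarith
  then have "\<not> S \<subseteq> ?B" by (metis Int_absorb2 order_less_irrefl)
  then obtain z where "z \<in> S" "\<not> cross_blocked z" using S(1) by blast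
  then show ?thesis using that by blast
qed

text \<open>An isolated vertex all of whose edges are faulty has at least two non-faulty neighbours, since
  at most one fault of the first half is a vertex.\<close>

lemma unblocked_faulty_edge_at_isolated:
  assumes x: "x \<in> V1 - Vf" and star_faulty: "{e \<in> E1. x \<in> e} \<subseteq> Ef \<inter> E1"
  obtains z u where "{x, z} \<in> Ef \<inter> E1" "{x, z} \<inter> Vf = {}" "u \<in> {x, z}" "\<not> cross_blocked u"
proof -
  have "card (Ef \<inter> E1) \<ge> 2*n - 3"
    using card_mono[OF finite_fault_parts(3) star_faulty] card_star_half1 x by simp
  then have "card (Vf \<inter> V1) \<le> 1" using faults1 n_ge_5 by linarith
  let ?S = "neighbours (V1, E1) x - Vf"
  have "neighbours (V1, E1) x \<inter> Vf \<subseteq> Vf \<inter> V1" using neighbours_half_subset by blast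
  then have "card (neighbours (V1, E1) x \<inter> Vf) \<le> 1"
    using card_mono[OF finite_fault_parts(1)] \<open>card (Vf \<inter> V1) \<le> 1\<close> by (meson order_trans)
  moreover have "card (neighbours (V1, E1) x) = card ?S + card (neighbours (V1, E1) x \<inter> Vf)"
  proof -
    have "neighbours (V1, E1) x = ?S \<union> (neighbours (V1, E1) x \<inter> Vf)" by blast
    moreover have "card (?S \<union> (neighbours (V1, E1) x \<inter> Vf)) =
        card ?S + card (neighbours (V1, E1) x \<inter> Vf)"
      using finite_neighbours_half by (intro card_Un_disjoint) auto
    ultimately show ?thesis by simp
  qed
  ultimately have S2: "card ?S \<ge> 2" using card_neighbours_half1 x n_ge_5 by simp
  have S3: "x \<notin> ?S"
  proof
    assume "x \<in> ?S"
    then have "{x, x} \<in> E1" unfolding neighbours_def by simp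
    then show False using simple_edges_card[OF simple_E1] by fastforce
  qed
  have S1: "?S \<subseteq> V1" "finite ?S" using neighbours_half_subset finite_neighbours_half by auto
  have "x \<in> V1" using x by blast
  then obtain z u where zu: "z \<in> ?S" "u \<in> {x, z}" "\<not> cross_blocked u"
    using unblocked_end_near[OF _ S1 S2 S3] by blast
  moreover from zu(1) have "{x, z} \<in> Ef \<inter> E1" "{x, z} \<inter> Vf = {}"
    using star_faulty x unfolding neighbours_def by auto
  ultimately show ?thesis using that by blast
qed

text \<open>If at most one edge of the first half is faulty, some faulty vertex has an edge avoiding all
  other faults: otherwise two faulty vertices would both have blocked neighbourhoods.\<close>

lemma faulty_vertex_with_private_edge:
  assumes "card (Ef \<inter> E1) \<le> 1"
  obtains z e where "z \<in> Vf \<inter> V1" "e \<in> E1 - Ef" "z \<in> e" "e \<inter> (Vf \<inter> V1 - {z}) = {}"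
proof -
  have "\<exists>z\<in>Vf \<inter> V1. \<exists>e\<in>E1 - Ef. z \<in> e \<and> e \<inter> (Vf \<inter> V1 - {z}) = {}"
  proof (rule ccontr)
    assume none: "\<not> ?thesis"
    have blocked: "\<forall>w\<in>neighbours (V1, E1) z. w \<in> Vf \<or> {z, w} \<in> Ef" if z: "z \<in> Vf \<inter> V1" for z
    proof
      fix w assume "w \<in> neighbours (V1, E1) z"
      then have zw: "{z, w} \<in> E1" unfolding neighbours_def by simp
      show "w \<in> Vf \<or> {z, w} \<in> Ef"
      proof (rule ccontr)
        assume "\<not> (w \<in> Vf \<or> {z, w} \<in> Ef)"
        with zw have "{z, w} \<in> E1 - Ef" "{z, w} \<inter> (Vf \<inter> V1 - {z}) = {}" by auto
        with z have "\<exists>z\<in>Vf \<inter> V1. \<exists>e\<in>E1 - Ef. z \<in> e \<and> e \<inter> (Vf \<inter> V1 - {z}) = {}" by blast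
        with none show False by contradiction
      qed
    qed
    have "card (Vf \<inter> V1) \<ge> 2" using faults1 assms n_ge_5 by linarith
    then obtain z1 z2 where "z1 \<in> Vf \<inter> V1" "z2 \<in> Vf \<inter> V1" "z1 \<noteq> z2" by (rule card_ge_2E)
    then show False
      using blocked_neighbourhood_unique[OF eq_imp_le[OF faults1], of z1 z2] blocked by simp
  qed
  then show ?thesis using that by blast
qed

lemma fpm_glued_2n_2_isolated:
  assumes x: "x \<in> V1 - Vf" "\<forall>e\<in>alive1. x \<notin> e"
  shows "\<exists>f. fractional_perfect_matching (delete glued (Vf, Ef)) f"
proof -
  have covered: "\<exists>e\<in>alive1. v \<in> e" if v: "v \<in> V1 - Vf" "v \<notin> {x}" for v
  proof (rule ccontr)
    assume "\<not> (\<exists>e\<in>alive1. v \<in> e)"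
    then have "v = x"
      using blocked_neighbourhood_unique[OF eq_imp_le[OF faults1]] v(1) x
        isolated_in_half1_blocking[of v] isolated_in_half1_blocking[OF x] by blast
    with v(2) show False by simp
  qed
  show ?thesis
  proof (cases "\<exists>z. z \<in> Vf \<inter> V1 \<and> {x, z} \<in> E1 - Ef")
    case True
    then obtain z where z: "z \<in> Vf \<inter> V1" "{x, z} \<in> E1 - Ef" by blast
    have "\<not> has_isolated_vertex (delete (V1, E1) (Vf \<inter> V1 - {z}, Ef \<inter> E1))"
    proof (rule no_isolated_half1I[of _ _ "{x}"])
      fix v assume "v \<in> V1 - (Vf \<inter> V1 - {z})" "v \<in> {x} \<or> v \<in> Vf"
      then have "v \<in> {x, z}" by blast
      with z x show "\<exists>e\<in>E1 - Ef \<inter> E1. v \<in> e \<and> e \<inter> (Vf \<inter> V1 - {z}) = {}"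
        by (intro bexI[of _ "{x, z}"]) auto
    qed (use covered in auto)
    then show ?thesis by (rule fpm_glued_restore_vertex[OF z(1)])
  next
    case False
    have star_faulty: "{e \<in> E1. x \<in> e} \<subseteq> Ef \<inter> E1"
      using isolated_in_half1_star_faulty[OF x] False by blast
    obtain z u where r: "{x, z} \<in> Ef \<inter> E1" "{x, z} \<inter> Vf = {}" and zu: "u \<in> {x, z}" "\<not> cross_blocked u"
      using unblocked_faulty_edge_at_isolated[OF x(1) star_faulty] by blast
    have "\<not> has_isolated_vertex (delete (V1, E1) (Vf \<inter> V1, Ef \<inter> E1 - {{x, z}}))"
    proof (rule no_isolated_half1I[of _ _ "{x}"])
      fix v assume "v \<in> V1 - Vf \<inter> V1" "v \<in> {x} \<or> v \<in> Vf"
      then have "v = x" by blast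
      with r show "\<exists>e\<in>E1 - (Ef \<inter> E1 - {{x, z}}). v \<in> e \<and> e \<inter> (Vf \<inter> V1) = {}"
        by (intro bexI[of _ "{x, z}"]) auto
    qed (use covered in auto)
    then show ?thesis by (rule fpm_glued_restore_edge[OF r zu])
  qed
qed

lemma fpm_glued_2n_2_no_isolated:
  assumes covered: "\<And>v. v \<in> V1 - Vf \<Longrightarrow> \<exists>e\<in>alive1. v \<in> e"
  shows "\<exists>f. fractional_perfect_matching (delete glued (Vf, Ef)) f"
proof (cases "card (Ef \<inter> E1) \<ge> 2")
  case True
  then obtain r1 r2 where "r1 \<in> Ef \<inter> E1" "r2 \<in> Ef \<inter> E1" "r1 \<noteq> r2" by (rule card_ge_2E)
  moreover from calculation have "\<exists>r\<in>{r1, r2}. \<exists>u\<in>r. \<not> cross_blocked u"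
    by (intro edge_pair_unblocked_end) auto
  ultimately obtain r u where r: "r \<in> Ef \<inter> E1" and u: "u \<in> r" "\<not> cross_blocked u"
    by blast
  have no_isolated: "\<not> has_isolated_vertex (delete (V1, E1) (Vf \<inter> V1, Ef \<inter> E1 - {r}))"
    by (rule no_isolated_half1I[of _ _ "{}"]) (use covered in auto)
  show ?thesis
  proof (cases "r \<inter> Vf = {}")
    case True
    show ?thesis by (rule fpm_glued_restore_edge[OF r True u no_isolated])
  next
    case False
    then have "r \<inter> (Vf \<inter> V1) \<noteq> {}" using E1_subset r by blast
    then have same: "delete (V1, E1) (Vf \<inter> V1, Ef \<inter> E1 - {r}) = delete (V1, E1) (Vf \<inter> V1, Ef \<inter> E1)"
      unfolding delete_def by auto
    have "card (Ef \<inter> E1 - {r}) = card (Ef \<inter> E1) - 1" using r finite_fault_parts(3) by simp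
    then have "card (Vf \<inter> V1) + card (Ef \<inter> E1 - {r}) \<le> 2*n - 3" using faults1 True by linarith
    then have "\<exists>g. fractional_perfect_matching (delete (V1, E1) (Vf \<inter> V1, Ef \<inter> E1)) g"
      using half1_fpm_no_isolated[OF _ _ _ no_isolated] unfolding same by blast
    moreover have "\<exists>k. fractional_perfect_matching (delete (V2, E2) (Vf \<inter> V2, Ef \<inter> E2)) k"
      using half2_fpm[of "Vf \<inter> V2" "Ef \<inter> E2"] faults2 n_ge_5 by simp
    ultimately show ?thesis by (rule fpm_glued_of_halves)
  qed
next
  case False
  then have "card (Ef \<inter> E1) \<le> 1" by simp
  then obtain z e where z: "z \<in> Vf \<inter> V1" and e: "e \<in> E1 - Ef" "z \<in> e" "e \<inter> (Vf \<inter> V1 - {z}) = {}"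
    by (rule faulty_vertex_with_private_edge)
  have "\<not> has_isolated_vertex (delete (V1, E1) (Vf \<inter> V1 - {z}, Ef \<inter> E1))"
  proof (rule no_isolated_half1I[of _ _ "{}"])
    fix v assume "v \<in> V1 - (Vf \<inter> V1 - {z})" "v \<in> {} \<or> v \<in> Vf"
    then have "v = z" by blast
    with e show "\<exists>e\<in>E1 - Ef \<inter> E1. v \<in> e \<and> e \<inter> (Vf \<inter> V1 - {z}) = {}" by blast
  qed (use covered in blast)+
  then show ?thesis by (rule fpm_glued_restore_vertex[OF z])
qed

lemma fpm_glued_half1_2n_2: "\<exists>f. fractional_perfect_matching (delete glued (Vf, Ef)) f"
proof (cases "\<exists>x. x \<in> V1 - Vf \<and> (\<forall>e\<in>alive1. x \<notin> e)")
  case True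
  then show ?thesis using fpm_glued_2n_2_isolated by blast
next
  case False
  then show ?thesis using fpm_glued_2n_2_no_isolated by blast
qed

end

end

end

subsection \<open>Exactly \<open>2n - 1\<close> faults in the first half\<close>

context faulty_glued
begin

lemma alive1_matching:
  assumes "matching H Mt"
  defines "U \<equiv> {w \<in> V1 - Vf. \<not> (\<exists>e\<in>Mt \<inter> alive1. w \<in> e)}"
  shows "\<forall>w\<in>V1 - Vf. (\<Sum>e\<in>{e \<in> alive1. w \<in> e}. if e \<in> Mt then 1 else 0) =
    1 - (if w \<in> U then 1 else (0::real))"
proof
  fix w assume w: "w \<in> V1 - Vf"
  have "(\<Sum>e\<in>{e \<in> alive1. w \<in> e}. if e \<in> Mt then 1 else 0) = real (card ({e \<in> alive1. w \<in> e} \<inter> Mt))"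
    using finite_alive1 by (simp add: sum.If_cases Int_commute)
  also have "card ({e \<in> alive1. w \<in> e} \<inter> Mt) = (if w \<in> U then 0 else 1)"
  proof (cases "w \<in> U")
    case True
    then have "{e \<in> alive1. w \<in> e} \<inter> Mt = {}" unfolding U_def by blast
    with True show ?thesis by simp
  next
    case False
    then obtain e0 where e0: "e0 \<in> Mt" "e0 \<in> alive1" "w \<in> e0" using w unfolding U_def by blast
    then have "{e \<in> alive1. w \<in> e} \<inter> Mt = {e0}"
      using assms(1) unfolding matching_def by blast
    with False show ?thesis by simp
  qed
  finally show "(\<Sum>e\<in>{e \<in> alive1. w \<in> e}. if e \<in> Mt then 1 else 0) =
      1 - (if w \<in> U then 1 else (0::real))"
    by simp
qed

end

context gaq_step
begin

context
  assumes faults1: "card (Vf \<inter> V1) + card (Ef \<inter> E1) = 2*n - 1"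
begin

lemma even_fault_subset:
  obtains A B where "A \<subseteq> Vf \<inter> V1" "B \<subseteq> Ef \<inter> E1" "card A + card B = 2*n - 4" "even (card A)"
proof (cases "card (Vf \<inter> V1) \<ge> 2*n - 4")
  case True
  obtain A where "A \<subseteq> Vf \<inter> V1" "card A = 2*n - 4"
    using obtain_subset_with_card_n[OF True] by metis
  then show ?thesis using that[of A "{}"] by simp
next
  case False
  define a where "a = (if even (card (Vf \<inter> V1)) then card (Vf \<inter> V1) else card (Vf \<inter> V1) - 1)"
  have a: "a \<le> card (Vf \<inter> V1)" "even a" "a + 1 \<ge> card (Vf \<inter> V1)" unfolding a_def by auto
  obtain A where A: "A \<subseteq> Vf \<inter> V1" "card A = a"
    using obtain_subset_with_card_n[OF a(1)] by metis
  have "2*n - 4 - a \<le> card (Ef \<inter> E1)" using a faults1 False n_ge_5 by linarith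
  then obtain B where B: "B \<subseteq> Ef \<inter> E1" "card B = 2*n - 4 - a"
    using obtain_subset_with_card_n by metis
  have "a \<le> 2*n - 4" using False a by linarith
  with A B a show ?thesis using that[of A B] by simp
qed

text \<open>An edge of the matching fails to survive only if it is one of the at most three faults that were
  not deleted before matching, so at most six vertices are left uncovered.\<close>

lemma card_uncovered_by_matching:
  assumes AB: "A \<subseteq> Vf \<inter> V1" "B \<subseteq> Ef \<inter> E1" "card A + card B = 2*n - 4"
    and Mt: "perfect_matching (delete (V1, E1) (A, B)) Mt"
  shows "card {w \<in> V1 - Vf. \<not> (\<exists>e\<in>Mt \<inter> alive1. w \<in> e)} \<le> 6"
proof -
  let ?U = "{w \<in> V1 - Vf. \<not> (\<exists>e\<in>Mt \<inter> alive1. w \<in> e)}"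
  let ?N = "{e \<in> Mt. e \<in> (Ef \<inter> E1) - B \<or> e \<inter> ((Vf \<inter> V1) - A) \<noteq> {}}"
  have mt: "matching (delete (V1, E1) (A, B)) Mt" and cov: "\<Union>Mt = V1 - A"
    using Mt unfolding perfect_matching_def by auto
  have Mt_edges: "Mt \<subseteq> edges (delete (V1, E1) (A, B))" using mt unfolding matching_def by blast
  then have Mt_E1: "Mt \<subseteq> E1" by auto
  then have "finite Mt" using finite_E1 finite_subset by blast
  have "?U \<subseteq> \<Union>?N"
  proof
    fix w assume wU: "w \<in> ?U"
    then have "w \<in> V1 - A" using AB by blast
    then obtain e where e: "e \<in> Mt" "w \<in> e" using cov by blast
    have "e \<notin> alive1" using wU e by blast
    moreover have eG: "e \<in> E1" "e \<notin> B" "e \<inter> A = {}" using e Mt_edges by auto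
    ultimately have "e \<in> Ef \<or> e \<inter> Vf \<noteq> {}" unfolding alive1_def by blast
    moreover have "e \<subseteq> V1" using E1_subset eG by blast
    ultimately have "e \<in> ?N" using e eG by blast
    then show "w \<in> \<Union>?N" using e by blast
  qed
  have at_most_one: "card {e \<in> Mt. z \<in> e} \<le> 1" for z
  proof (cases "{e \<in> Mt. z \<in> e} = {}")
    case False
    then obtain e0 where e0: "e0 \<in> Mt" "z \<in> e0" by blast
    have "e = e0" if "e \<in> Mt" "z \<in> e" for e
      using mt that e0 unfolding matching_def by blast
    then have "{e \<in> Mt. z \<in> e} = {e0}" using e0 by blast
    then show ?thesis by simp
  next
    case True
    show ?thesis unfolding True by simp
  qed
  have "?N \<subseteq> ((Ef \<inter> E1) - B) \<union> (\<Union>z\<in>(Vf \<inter> V1) - A. {e \<in> Mt. z \<in> e})" by blast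
  then have "card ?N \<le> card (((Ef \<inter> E1) - B) \<union> (\<Union>z\<in>(Vf \<inter> V1) - A. {e \<in> Mt. z \<in> e}))"
    using finite_fault_parts(1,3) \<open>finite Mt\<close> by (intro card_mono) simp_all
  also have "\<dots> \<le> card ((Ef \<inter> E1) - B) + card (\<Union>z\<in>(Vf \<inter> V1) - A. {e \<in> Mt. z \<in> e})"
    by (rule card_Un_le)
  also have "card (\<Union>z\<in>(Vf \<inter> V1) - A. {e \<in> Mt. z \<in> e}) \<le> (\<Sum>z\<in>(Vf \<inter> V1) - A. card {e \<in> Mt. z \<in> e})"
    using finite_fault_parts(1) by (intro card_UN_le) simp
  also have "\<dots> \<le> (\<Sum>z\<in>(Vf \<inter> V1) - A. 1)" by (rule sum_mono) (rule at_most_one)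
  finally have "card ?N \<le> card ((Ef \<inter> E1) - B) + card ((Vf \<inter> V1) - A)" by simp
  moreover have "card ((Ef \<inter> E1) - B) = card (Ef \<inter> E1) - card B"
    using AB(2) finite_fault_parts(3) by (meson card_Diff_subset finite_subset)
  moreover have "card ((Vf \<inter> V1) - A) = card (Vf \<inter> V1) - card A"
    using AB(1) finite_fault_parts(1) by (meson card_Diff_subset finite_subset)
  moreover have "card B \<le> card (Ef \<inter> E1)" "card A \<le> card (Vf \<inter> V1)"
    using AB card_mono finite_fault_parts(1,3) by blast+
  ultimately have "card ?N \<le> 3" using faults1 AB(3) n_ge_5 by linarith
  have "\<Union>?N \<subseteq> V1" using Mt_E1 E1_subset by blast
  then have "card ?U \<le> card (\<Union>?N)"
    using \<open>?U \<subseteq> \<Union>?N\<close> finite_V1 by (meson card_mono finite_subset)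
  also have "\<dots> \<le> (\<Sum>e\<in>?N. card e)" by (rule card_Union_le_sum_card)
  also have "\<dots> = (\<Sum>e\<in>?N. 2)"
    using Mt_E1 simple_edges_card[OF simple_E1] by (intro sum.cong) auto
  finally show ?thesis using \<open>card ?N \<le> 3\<close> by simp
qed

text \<open>With all \<open>2n - 1\<close> faults in the first half, an even-sized part of them of size \<open>2n - 4\<close> still
  leaves a perfect matching; its few uncovered vertices are sent across along \<open>M1\<close>.\<close>

lemma fpm_glued_half1_2n_1:
  assumes no_other_faults: "Vf \<inter> V2 = {}" "Ef \<inter> E2 = {}" "Ef \<inter> (M1 \<union> M2) = {}"
  shows "\<exists>f. fractional_perfect_matching (delete glued (Vf, Ef)) f"
proof -
  obtain A B where AB: "A \<subseteq> Vf \<inter> V1" "B \<subseteq> Ef \<inter> E1" "card A + card B = 2*n - 4" "even (card A)"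
    by (rule even_fault_subset)
  then have "A \<subseteq> V1" "B \<subseteq> E1" "card A + card B < 2*n - 3" using n_ge_5 by auto
  then obtain Mt where Mt: "perfect_matching (delete (V1, E1) (A, B)) Mt"
    using half1_perfect_matching AB(4) by blast
  define U where "U = {w \<in> V1 - Vf. \<not> (\<exists>e\<in>Mt \<inter> alive1. w \<in> e)}"
  have "card U \<le> 6" using card_uncovered_by_matching[OF AB(1-3) Mt] unfolding U_def .
  have "matching (delete (V1, E1) (A, B)) Mt" using Mt unfolding perfect_matching_def by blast
  note deficiency = alive1_matching[OF this, folded U_def]
  define \<sigma> where "\<sigma> w = (SOME v. v \<in> V2 \<and> {w, v} \<in> M1)" for w
  have \<sigma>: "\<sigma> w \<in> V2 \<and> {w, \<sigma> w} \<in> M1" if w: "w \<in> V1" for w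
  proof -
    obtain v1 where "v1 \<in> V2" "{w, v1} \<in> M1" using cross_partners[OF w] by metis
    then show ?thesis unfolding \<sigma>_def by (metis (mono_tags, lifting) someI)
  qed
  have UV: "U \<subseteq> V1 - Vf" unfolding U_def by blast
  have "\<forall>w\<in>U. \<sigma> w \<in> V2 - Vf \<and> {w, \<sigma> w} \<in> (M1 \<union> M2) - Ef"
    using \<sigma> UV no_other_faults by blast
  moreover have "inj_on \<sigma> U"
    using \<sigma> UV M1_partner_unique by (intro inj_onI) (metis Diff_iff subsetD)
  moreover have "card (Vf \<inter> V2) + card (Ef \<inter> E2) + card U \<le> 2*n - 4"
    using no_other_faults \<open>card U \<le> 6\<close> n_ge_5 by simp
  moreover have "finite U" using UV finite_V1 finite_subset by auto
  ultimately show ?thesis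
    using fpm_glued_uniform[OF UV _ _ _ _ _ _ _ deficiency] by simp
qed

end

end

context gaq_step
begin

lemma card_faults_split:
  assumes "Vf \<subseteq> V1 \<union> V2" "Ef \<subseteq> E1 \<union> E2 \<union> M1 \<union> M2"
  shows "card Vf + card Ef = (card (Vf \<inter> V1) + card (Ef \<inter> E1)) + (card (Vf \<inter> V2) + card (Ef \<inter> E2))
    + card (Ef \<inter> (M1 \<union> M2))"
proof -
  have "Vf = (Vf \<inter> V1) \<union> (Vf \<inter> V2)" using assms(1) by blast
  moreover have "card ((Vf \<inter> V1) \<union> (Vf \<inter> V2)) = card (Vf \<inter> V1) + card (Vf \<inter> V2)"
    by (rule card_Un_disjoint) (use finite_fault_parts disjoint in auto)
  moreover have "Ef = ((Ef \<inter> E1) \<union> (Ef \<inter> E2)) \<union> (Ef \<inter> (M1 \<union> M2))" using assms(2) by blast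
  moreover have "card ((Ef \<inter> E1) \<union> (Ef \<inter> E2)) = card (Ef \<inter> E1) + card (Ef \<inter> E2)"
    by (rule card_Un_disjoint) (use finite_fault_parts E1_notin_E2 in auto)
  moreover have "card (((Ef \<inter> E1) \<union> (Ef \<inter> E2)) \<union> (Ef \<inter> (M1 \<union> M2))) =
      card ((Ef \<inter> E1) \<union> (Ef \<inter> E2)) + card (Ef \<inter> (M1 \<union> M2))"
    by (rule card_Un_disjoint) (use finite_fault_parts cross_notin_E1 cross_notin_E2 in auto)
  ultimately show ?thesis by simp
qed

lemma fpm_glued_heavier_half1:
  assumes faults: "Vf \<subseteq> V1 \<union> V2" "Ef \<subseteq> E1 \<union> E2 \<union> M1 \<union> M2"
    and total: "card Vf + card Ef \<le> 2*n - 1"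
    and no_isolated: "\<not> has_isolated_vertex (delete glued (Vf, Ef))"
    and heavier: "card (Vf \<inter> V2) + card (Ef \<inter> E2) \<le> card (Vf \<inter> V1) + card (Ef \<inter> E1)"
  shows "\<exists>f. fractional_perfect_matching (delete glued (Vf, Ef)) f"
proof -
  let ?a1 = "card (Vf \<inter> V1) + card (Ef \<inter> E1)" and ?a2 = "card (Vf \<inter> V2) + card (Ef \<inter> E2)"
    and ?am = "card (Ef \<inter> (M1 \<union> M2))"
  have sum: "?a1 + ?a2 + ?am \<le> 2*n - 1" using total card_faults_split[OF faults] by linarith
  have half2: "\<exists>k. fractional_perfect_matching (delete (V2, E2) (Vf \<inter> V2, Ef \<inter> E2)) k"
    if "?a2 < 2*n - 3"
    using half2_fpm[of "Vf \<inter> V2" "Ef \<inter> E2"] that by simp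
  consider "?a1 \<le> 2*n - 4" | "?a1 = 2*n - 3" | "?a1 = 2*n - 2" | "?a1 = 2*n - 1"
    using sum by linarith
  then show ?thesis
  proof cases
    case 1
    then have "\<exists>g. fractional_perfect_matching (delete (V1, E1) (Vf \<inter> V1, Ef \<inter> E1)) g"
      using half1_fpm[of "Vf \<inter> V1" "Ef \<inter> E1"] n_ge_5 by simp
    moreover have "?a2 < 2*n - 3" using 1 heavier n_ge_5 by linarith
    ultimately show ?thesis using half2 by (blast intro: fpm_glued_of_halves)
  next
    case 2
    then have faults2: "?a2 \<le> 2" using sum n_ge_5 by linarith
    show ?thesis
    proof (cases "\<exists>x. x \<in> V1 - Vf \<and> (\<forall>e\<in>alive1. x \<notin> e)")
      case True
      then obtain x where "x \<in> V1 - Vf" "\<forall>e\<in>alive1. x \<notin> e" by blast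
      then show ?thesis by (rule fpm_glued_isolated_in_half1[OF 2 _ _ faults2 no_isolated])
    next
      case False
      have "\<not> has_isolated_vertex (delete (V1, E1) (Vf \<inter> V1, Ef \<inter> E1))"
      proof (rule no_isolated_half1I[of _ _ "{}"])
        show "\<exists>e\<in>alive1. v \<in> e" if "v \<in> V1 - Vf" for v using that False by blast
      qed auto
      then have "\<exists>g. fractional_perfect_matching (delete (V1, E1) (Vf \<inter> V1, Ef \<inter> E1)) g"
        using half1_fpm_no_isolated[of "Vf \<inter> V1" "Ef \<inter> E1"] 2 by simp
      moreover have "?a2 < 2*n - 3" using faults2 n_ge_5 by linarith
      ultimately show ?thesis using half2 by (blast intro: fpm_glued_of_halves)
    qed
  next
    case 3
    then have "card (Vf \<inter> V2) + ?am \<le> 1" "?a2 \<le> 1" using sum n_ge_5 by linarith+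
    then show ?thesis using fpm_glued_half1_2n_2 3 by blast
  next
    case 4
    then have "?a2 = 0" "?am = 0" using sum by linarith+
    then have "Vf \<inter> V2 = {}" "Ef \<inter> E2 = {}" "Ef \<inter> (M1 \<union> M2) = {}"
      using finite_fault_parts by simp_all
    then show ?thesis using fpm_glued_half1_2n_1 4 by blast
  qed
qed

end

lemma isolated_vertex_fault_count:
  assumes simple: "simple_edges (verts G) (edges G)" and fin: "finite (verts G)"
    and F: "fault_set G F" and iso: "has_isolated_vertex (delete G F)"
  obtains v where "v \<in> verts G" "degree G v \<le> fsize F"
proof -
  obtain v where v: "v \<in> verts G - fst F" "\<forall>e\<in>edges (delete G F). v \<notin> e"
    using iso unfolding has_isolated_vertex_def by auto
  have sub: "{e \<in> edges G. v \<in> e} \<subseteq> snd F \<union> (\<lambda>w. {v, w}) ` fst F"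
  proof
    fix e assume e: "e \<in> {e \<in> edges G. v \<in> e}"
    show "e \<in> snd F \<union> (\<lambda>w. {v, w}) ` fst F"
    proof (cases "e \<in> snd F")
      case False
      then have "e \<inter> fst F \<noteq> {}" using v e by auto
      then obtain w where w: "w \<in> e" "w \<in> fst F" by blast
      then have "e = {v, w}" using simple_edges_eq[OF simple] e v by blast
      with w show ?thesis by blast
    qed simp
  qed
  have fin_F: "finite (fst F)" "finite (snd F)"
    using F fin simple_edges_finite[OF fin simple] finite_subset unfolding fault_set_def by blast+
  have "degree G v \<le> card (snd F \<union> (\<lambda>w. {v, w}) ` fst F)"
    unfolding degree_def using sub fin_F by (intro card_mono) auto
  also have "\<dots> \<le> card (snd F) + card ((\<lambda>w. {v, w}) ` fst F)" by (rule card_Un_le)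
  also have "card ((\<lambda>w. {v, w}) ` fst F) \<le> card (fst F)" by (rule card_image_le[OF fin_F(1)])
  finally have "degree G v \<le> fsize F" unfolding fsize_def by simp
  with v show ?thesis using that by blast
qed

lemma fsmp_set_star:
  assumes "v \<in> verts G"
  shows "fsmp_set G ({}, {e \<in> edges G. v \<in> e})"
  unfolding fsmp_set_def
proof
  show "fault_set G ({}, {e \<in> edges G. v \<in> e})" unfolding fault_set_def by auto
  show "\<nexists>f. fractional_perfect_matching (delete G ({}, {e \<in> edges G. v \<in> e})) f"
  proof
    assume "\<exists>f. fractional_perfect_matching (delete G ({}, {e \<in> edges G. v \<in> e})) f"
    then obtain f where "fractional_perfect_matching (delete G ({}, {e \<in> edges G. v \<in> e})) f" ..
    moreover have "v \<in> verts (delete G ({}, {e \<in> edges G. v \<in> e}))" using assms by simp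
    ultimately have "(\<Sum>e\<in>{e \<in> edges (delete G ({}, {e \<in> edges G. v \<in> e})). v \<in> e}. f e) = 1"
      unfolding fractional_perfect_matching_def by blast
    moreover have empty: "{e \<in> edges (delete G ({}, {e \<in> edges G. v \<in> e})). v \<in> e} = {}" by auto
    ultimately show False unfolding empty by simp
  qed
qed

text \<open>Deleting the star of a vertex gives an FSMP set of size \<open>d\<close>; conversely an FSMP set of size at
  most \<open>d\<close> must, by hypothesis, leave an isolated vertex, which costs at least \<open>d\<close> faults.\<close>

lemma fractional_strongly_super_matchedI:
  assumes fin: "finite (verts G)" and simple: "simple_edges (verts G) (edges G)"
    and nonempty: "verts G \<noteq> {}"
    and regular: "\<And>v. v \<in> verts G \<Longrightarrow> degree G v = d"
    and fpm: "\<And>F. fault_set G F \<Longrightarrow> fsize F \<le> d \<Longrightarrow> \<not> has_isolated_vertex (delete G F) \<Longrightarrow>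
      \<exists>f. fractional_perfect_matching (delete G F) f"
  shows "fractional_strongly_super_matched G"
proof -
  have "degree G ` verts G = {d}" using nonempty regular by auto
  then have min_degree: "min_degree G = d" unfolding min_degree_def by simp
  obtain v0 where v0: "v0 \<in> verts G" using nonempty by blast
  have fpm_unless_isolated: "has_isolated_vertex (delete G F)"
    if F: "fsmp_set G F" "fsize F \<le> d" for F
  proof (rule ccontr)
    assume "\<not> has_isolated_vertex (delete G F)"
    moreover have "fault_set G F" using F(1) unfolding fsmp_set_def by simp
    ultimately have "\<exists>f. fractional_perfect_matching (delete G F) f" using fpm F(2) by blast
    then show False using F(1) unfolding fsmp_set_def by blast
  qed
  have lower: "d \<le> fsize F" if F: "fsmp_set G F" for F
  proof (rule ccontr)
    assume "\<not> d \<le> fsize F"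
    then have "has_isolated_vertex (delete G F)" using fpm_unless_isolated F by simp
    moreover have "fault_set G F" using F unfolding fsmp_set_def by simp
    ultimately obtain v where "v \<in> verts G" "degree G v \<le> fsize F"
      using isolated_vertex_fault_count[OF simple fin] by blast
    with regular \<open>\<not> d \<le> fsize F\<close> show False by simp
  qed
  have "fsize ({}, {e \<in> edges G. v0 \<in> e}) = d"
    using regular[OF v0] unfolding fsize_def degree_def by simp
  then have fsmp: "fsmp G = d"
    unfolding fsmp_def using fsmp_set_star[OF v0] lower by (intro Least_equality) blast+
  have "has_isolated_vertex (delete G F)" if "optimal_fsmp_set G F" for F
    using that fpm_unless_isolated fsmp unfolding optimal_fsmp_set_def by simp
  then show ?thesis
    unfolding fractional_strongly_super_matched_def fractional_strongly_maximally_matched_def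
    using fsmp min_degree by simp
qed

lemma gaq_fpm_unless_isolated:
  fixes G :: "'a graph"
  assumes gaq: "gaq n G" and n: "n \<ge> 5"
    and even_super: "\<forall>G :: 'a graph. gaq (n - 1) G \<longrightarrow> even_strongly_super_matched G"
    and fractional_super: "\<forall>G :: 'a graph. gaq (n - 1) G \<longrightarrow> fractional_strongly_super_matched G"
    and F: "fault_set G (Vf, Ef)" "fsize (Vf, Ef) \<le> 2*n - 1"
    and no_isolated: "\<not> has_isolated_vertex (delete G (Vf, Ef))"
  shows "\<exists>f. fractional_perfect_matching (delete G (Vf, Ef)) f"
  using gaq
proof (cases rule: gaq.cases)
  case base
  with n show ?thesis by simp
next
  case (step m V1 E1 V2 E2 M1 M2)
  then have halves: "gaq (n - 1) (V1, E1)" "gaq (n - 1) (V2, E2)" by simp_all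
  interpret glued_pair V1 E1 V2 E2 M1 M2
    using step gaq_invariant[OF halves(1)] gaq_invariant[OF halves(2)]
    by unfold_locales (simp_all add: gaq_invariant_def)
  interpret gaq_step V1 E1 V2 E2 M1 M2 Vf Ef n
    using n gaq_invariant[OF halves(1)] gaq_invariant[OF halves(2)] halves even_super fractional_super
    by unfold_locales simp_all
  interpret other: gaq_step V2 E2 V1 E1 M1 M2 Vf Ef n by (rule swap_step)
  have G: "G = glued" using step by simp
  have faults: "Vf \<subseteq> V1 \<union> V2" "Ef \<subseteq> E1 \<union> E2 \<union> M1 \<union> M2"
    using F(1) unfolding G fault_set_def by auto
  have total: "card Vf + card Ef \<le> 2*n - 1" using F(2) unfolding fsize_def by simp
  show ?thesis
  proof (cases "card (Vf \<inter> V2) + card (Ef \<inter> E2) \<le> card (Vf \<inter> V1) + card (Ef \<inter> E1)")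
    case True
    then show ?thesis using fpm_glued_heavier_half1[OF faults total] no_isolated G by simp
  next
    case False
    then show ?thesis
      using other.fpm_glued_heavier_half1 faults total no_isolated G
      by (simp add: glued_swap Un_commute Un_left_commute)
  qed
qed

theorem theorem3p6:
  fixes n :: nat
  assumes "n \<ge> 5"
    and "\<forall>G :: 'a graph. gaq (n - 1) G \<longrightarrow> even_strongly_super_matched G"
    and "\<forall>G :: 'a graph. gaq (n - 1) G \<longrightarrow> fractional_strongly_super_matched G"
  shows "\<forall>G :: 'a graph. gaq n G \<longrightarrow> fractional_strongly_super_matched G"
proof (intro allI impI)
  fix G :: "'a graph" assume gaq: "gaq n G"
  then have inv: "gaq_invariant n G" by (rule gaq_invariant)
  show "fractional_strongly_super_matched G"
  proof (rule fractional_strongly_super_matchedI)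
    show "finite (verts G)" "simple_edges (verts G) (edges G)" "verts G \<noteq> {}"
      using inv unfolding gaq_invariant_def by auto
    show "degree G v = 2*n - 1" if "v \<in> verts G" for v
      using gaq_invariant_degree[OF inv that] .
    show "\<exists>f. fractional_perfect_matching (delete G F) f"
      if "fault_set G F" "fsize F \<le> 2*n - 1" "\<not> has_isolated_vertex (delete G F)" for F
      using gaq_fpm_unless_isolated[OF gaq assms, of "fst F" "snd F"] that by simp
  qed
qed

end
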